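(* Let $2\le n\le\infty$, $r\ge0$ and let $A$ be an $n$-multicomplex. Then $\iota_A=\iota\otimes1_A\colon A\cong R^{0,0}\otimes A\to P_r(A)=\Lambda_r\otimes A$ is an $r$-homotopy equivalence (hence an $E_r$-quasi-isomorphism), and $\pi_A=\pi\otimes1_A\colon P_r(A)\to A\oplus A$ is a fibration in the $r$-model structure, i.e. $E_i(\pi_A)$ is bidegree-wise surjective for all $0\le i\le r$. The composite $\pi_A\iota_A$ is the diagonal $A\to A\oplus A$, so $P_r(A)$ is a (functorial) path object for $A$ in the $r$-model structure.
   Context: $R$ is a commutative unital ring. For $1\le n\le\infty$, an $n$-multicomplex is a $\mathbb Z\times\mathbb Z$-bigraded $R$-module $A$ with $R$-linear maps $d_i$ ($i\ge0$) of bidegree $(-i,1-i)$ such that $\sum_{i+j=l}(-1)^id_id_j=0$ for all $l\ge0$ and $d_i=0$ for $i\ge n$; morphisms are bidegree $(0,0)$ maps commuting with all $d_i$. Bicomplexes ($2$-multicomplexes) are regarded as $n$-multicomplexes. Tensor product: $(A\otimes B)^{p,q}=\bigoplus A^{p_1,q_1}\otimes_RB^{p_2,q_2}$ ($p_1+p_2=p$, $q_1+q_2=q$), $d_i(a\otimes b)=d_ia\otimes b+(-1)^{\langle(-i,1-i),(a_1,a_2)\rangle}a\otimes d_ib$ for $a$ of bidegree $(a_1,a_2)$, where $\langle(x_1,x_2),(y_1,y_2)\rangle=x_1y_1+x_2y_2$. Spectral sequence: $Z_0^{p,q}(A)=A^{p,q}$; for $r\ge1$, $Z_r^{p,q}(A)$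 is the set of $a_0\in A^{p,q}$ for which there exist $a_j\in A^{p-j,q-j}$ ($1\le j\le r-1$) with $\sum_{i+j=l}(-1)^id_ia_j=0$ for $0\le l\le r-1$. $B_0=0$, $B_1^{p,q}(A)=A^{p,q}\cap\operatorname{im}d_0$, and for $r\ge2$, $B_r^{p,q}(A)$ is the set of $x\in A^{p,q}$ for which there exist $b_i\in A^{p+r-1-i,q+r-2-i}$ ($0\le i\le r-1$) with $x=\sum_{i=0}^{r-1}(-1)^id_ib_{r-1-i}$ and $\sum_{i=0}^l(-1)^id_ib_{l-i}=0$ for $0\le l\le r-2$. $E_r^{p,q}(A)=Z_r^{p,q}(A)/B_r^{p,q}(A)$; $E_r$-quasi-isomorphism means $E_{r+1}(f)$ is an isomorphism. $r$-homotopy: for morphisms $f,g\colon A\to B$, an $r$-homotopy from $f$ to $g$ is a family of maps $h_m\colon A\to B$ ($m\ge0$) of bidegree $(-m+r,-m+r-1)$ with $\sum_{i+j=m}\big((-1)^{i+r}d_ih_j+(-1)^ih_id_j\big)$ equal to $g-f$ if $m=r$ and $0$ otherwise. $f\colon A\to B$ is an $r$-homotopy equivalence if there is $g\colon B\to A$ with $fg$ $r$-homotopic to $1_B$ and $gf$ $r$-homotopic to $1_A$. Path bicomplexes: $\Lambda_0$ has basis $\beta_-,\beta_{0,0}$ in bidegree $(0,0)$ and $\beta_{0,1}$ in bidegree $(0,1)$, with $d_0\beta_-=-\beta_{0,1}$, $d_0\beta_{0,0}=\beta_{0,1}$, other structure maps zero. For $r\ge1$, $\Lambda_r$ has basis $\beta_-$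 (bidegree $(0,0)$), $\beta_{-i,-i}$ and $\beta_{-i-1,-i}$ for $0\le i\le r-1$ ($\beta_{u,v}$ in bidegree $(u,v)$), with nonzero structure maps $d_1\beta_{0,0}=-d_1\beta_-=\beta_{-1,0}$, and $d_0\beta_{-i,-i}=\beta_{-i,1-i}$, $d_1\beta_{-i,-i}=\beta_{-i-1,-i}$ for $1\le i\le r-1$. $\iota\colon R^{0,0}\to\Lambda_r$ sends $1\mapsto\beta_-+\beta_{0,0}$, and $\pi\colon\Lambda_r\to(R\oplus R)^{0,0}$ is $(\partial_-,\partial_+)$ where $\partial_-$, $\partial_+$ are the coordinate projections onto $R\beta_-$ and $R\beta_{0,0}$. $P_r(A)=\Lambda_r\otimes A$. The $r$-model structure on $n$-multicomplexes has weak equivalences the $E_r$-quasi-isomorphisms and fibrations the morphisms $f$ with $E_i(f)$ bidegree-wise surjective for $0\le i\le r$. *)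

theory Defs
  imports Main "HOL-Library.Extended_Nat" "HOL-Library.Function_Algebras" "HOL-Library.Product_Plus"
begin

text \<open>A bigraded R-module is given by its homogeneous components A^{p,q}, each a
submodule-like subset of an ambient abelian group 'a, with a scalar action of the
commutative unital ring 'r. All maps (structure maps, morphisms, homotopies) are given
componentwise, indexed by the bidegree of their source component; A is regarded as the
external direct sum of its components.\<close>

record ('r, 'a) mcx =
  car  :: "int \<Rightarrow> int \<Rightarrow> 'a set"
  smul :: "'r \<Rightarrow> 'a \<Rightarrow> 'a"
  dd   :: "nat \<Rightarrow> int \<Rightarrow> int \<Rightarrow> 'a \<Rightarrow> 'a"

definition sgnf :: "nat \<Rightarrow> 'a::ab_group_add \<Rightarrow> 'a" where
  "sgnf i x = (if even i then x else - x)"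

definition isgn :: "int \<Rightarrow> 'a::ab_group_add \<Rightarrow> 'a" where
  "isgn k x = (if even k then x else - x)"

definition rmodule_on :: "('r::comm_ring_1 \<Rightarrow> 'a::ab_group_add \<Rightarrow> 'a) \<Rightarrow> 'a set \<Rightarrow> bool" where
  "rmodule_on s S \<longleftrightarrow> 0 \<in> S \<and> (\<forall>x\<in>S. \<forall>y\<in>S. x + y \<in> S) \<and> (\<forall>x\<in>S. - x \<in> S)
     \<and> (\<forall>c. \<forall>x\<in>S. s c x \<in> S)
     \<and> (\<forall>a b. \<forall>x\<in>S. s (a * b) x = s a (s b x)) \<and> (\<forall>x\<in>S. s 1 x = x)
     \<and> (\<forall>a b. \<forall>x\<in>S. s (a + b) x = s a x + s b x)
     \<and> (\<forall>a. \<forall>x\<in>S. \<forall>y\<in>S. s a (x + y) = s a x + s a y)"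

definition lin_on :: "('r \<Rightarrow> 'a::ab_group_add \<Rightarrow> 'a) \<Rightarrow> ('r \<Rightarrow> 'b::ab_group_add \<Rightarrow> 'b)
    \<Rightarrow> 'a set \<Rightarrow> ('a \<Rightarrow> 'b) \<Rightarrow> bool" where
  "lin_on sa sb S f \<longleftrightarrow> (\<forall>x\<in>S. \<forall>y\<in>S. f (x + y) = f x + f y) \<and> (\<forall>c. \<forall>x\<in>S. f (sa c x) = sb c (f x))"

definition multicomplex :: "enat \<Rightarrow> ('r::comm_ring_1, 'a::ab_group_add) mcx \<Rightarrow> bool" where
  "multicomplex n A \<longleftrightarrow>
     (\<forall>p q. rmodule_on (smul A) (car A p q)) \<and>
     (\<forall>i p q. \<forall>x\<in>car A p q. dd A i p q x \<in> car A (p - int i) (q + 1 - int i)) \<and>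
     (\<forall>i p q. lin_on (smul A) (smul A) (car A p q) (dd A i p q)) \<and>
     (\<forall>i p q. n \<le> enat i \<longrightarrow> (\<forall>x\<in>car A p q. dd A i p q x = 0)) \<and>
     (\<forall>l p q. \<forall>x\<in>car A p q.
        (\<Sum>j\<le>l. sgnf (l - j) (dd A (l - j) (p - int j) (q + 1 - int j) (dd A j p q x))) = 0)"

definition mc_morphism :: "('r, 'a::ab_group_add) mcx \<Rightarrow> ('r, 'b::ab_group_add) mcx
    \<Rightarrow> (int \<Rightarrow> int \<Rightarrow> 'a \<Rightarrow> 'b) \<Rightarrow> bool" where
  "mc_morphism A B f \<longleftrightarrow>
     (\<forall>p q. \<forall>x\<in>car A p q. f p q x \<in> car B p q) \<and>
     (\<forall>p q. lin_on (smul A) (smul B) (car A p q) (f p q)) \<and>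
     (\<forall>i p q. \<forall>x\<in>car A p q. f (p - int i) (q + 1 - int i) (dd A i p q x) = dd B i p q (f p q x))"

definition r_homotopy :: "nat \<Rightarrow> ('r, 'a::ab_group_add) mcx \<Rightarrow> ('r, 'b::ab_group_add) mcx
    \<Rightarrow> (int \<Rightarrow> int \<Rightarrow> 'a \<Rightarrow> 'b) \<Rightarrow> (int \<Rightarrow> int \<Rightarrow> 'a \<Rightarrow> 'b)
    \<Rightarrow> (nat \<Rightarrow> int \<Rightarrow> int \<Rightarrow> 'a \<Rightarrow> 'b) \<Rightarrow> bool" where
  "r_homotopy r A B f g h \<longleftrightarrow>
     (\<forall>m p q. \<forall>x\<in>car A p q. h m p q x \<in> car B (p - int m + int r) (q - int m + int r - 1)) \<and>
     (\<forall>m p q. lin_on (smul A) (smul B) (car A p q) (h m p q)) \<and>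
     (\<forall>m p q. \<forall>x\<in>car A p q.
        (\<Sum>i\<le>m. sgnf (i + r) (dd B i (p - int (m - i) + int r) (q - int (m - i) + int r - 1)
                                   (h (m - i) p q x))
               + sgnf i (h i (p - int (m - i)) (q + 1 - int (m - i)) (dd A (m - i) p q x)))
        = (if m = r then g p q x - f p q x else 0))"

definition r_homotopic :: "nat \<Rightarrow> ('r, 'a::ab_group_add) mcx \<Rightarrow> ('r, 'b::ab_group_add) mcx
    \<Rightarrow> (int \<Rightarrow> int \<Rightarrow> 'a \<Rightarrow> 'b) \<Rightarrow> (int \<Rightarrow> int \<Rightarrow> 'a \<Rightarrow> 'b) \<Rightarrow> bool" where
  "r_homotopic r A B f g \<longleftrightarrow> (\<exists>h. r_homotopy r A B f g h)"

definition r_homotopy_equivalence :: "nat \<Rightarrow> ('r, 'a::ab_group_add) mcx \<Rightarrow> ('r, 'b::ab_group_add) mcx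
    \<Rightarrow> (int \<Rightarrow> int \<Rightarrow> 'a \<Rightarrow> 'b) \<Rightarrow> bool" where
  "r_homotopy_equivalence r A B f \<longleftrightarrow> mc_morphism A B f \<and>
     (\<exists>g. mc_morphism B A g \<and>
          r_homotopic r B B (\<lambda>p q y. f p q (g p q y)) (\<lambda>p q y. y) \<and>
          r_homotopic r A A (\<lambda>p q x. g p q (f p q x)) (\<lambda>p q x. x))"

definition Zr :: "('r, 'a::ab_group_add) mcx \<Rightarrow> nat \<Rightarrow> int \<Rightarrow> int \<Rightarrow> 'a set" where
  "Zr A r p q = {a0 \<in> car A p q. \<exists>a :: nat \<Rightarrow> 'a. a 0 = a0 \<and>
       (\<forall>j. 1 \<le> j \<and> j < r \<longrightarrow> a j \<in> car A (p - int j) (q - int j)) \<and>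
       (\<forall>l<r. (\<Sum>j\<le>l. sgnf (l - j) (dd A (l - j) (p - int j) (q - int j) (a j))) = 0)}"

definition Br :: "('r, 'a::ab_group_add) mcx \<Rightarrow> nat \<Rightarrow> int \<Rightarrow> int \<Rightarrow> 'a set" where
  "Br A r p q =
     (if r = 0 then {0}
      else if r = 1 then {x \<in> car A p q. \<exists>y\<in>car A p (q - 1). dd A 0 p (q - 1) y = x}
      else {x \<in> car A p q. \<exists>b :: nat \<Rightarrow> 'a.
              (\<forall>i<r. b i \<in> car A (p + int r - 1 - int i) (q + int r - 2 - int i)) \<and>
              x = (\<Sum>i<r. sgnf i (dd A i (p + int r - 1 - int (r - 1 - i))
                                        (q + int r - 2 - int (r - 1 - i)) (b (r - 1 - i)))) \<and>
              (\<forall>l. l + 2 \<le> r \<longrightarrow>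
                 (\<Sum>i\<le>l. sgnf i (dd A i (p + int r - 1 - int (l - i))
                                        (q + int r - 2 - int (l - i)) (b (l - i)))) = 0)})"

text \<open>E_r(f) : Z_r/B_r -> Z_r/B_r, bidegree-wise surjective / injective
  (the induced map on quotients, written out).\<close>
definition E_surj :: "('r, 'a::ab_group_add) mcx \<Rightarrow> ('r, 'b::ab_group_add) mcx
    \<Rightarrow> (int \<Rightarrow> int \<Rightarrow> 'a \<Rightarrow> 'b) \<Rightarrow> nat \<Rightarrow> bool" where
  "E_surj A B f r \<longleftrightarrow> (\<forall>p q. \<forall>y\<in>Zr B r p q. \<exists>x\<in>Zr A r p q. f p q x - y \<in> Br B r p q)"

definition E_inj :: "('r, 'a::ab_group_add) mcx \<Rightarrow> ('r, 'b::ab_group_add) mcx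
    \<Rightarrow> (int \<Rightarrow> int \<Rightarrow> 'a \<Rightarrow> 'b) \<Rightarrow> nat \<Rightarrow> bool" where
  "E_inj A B f r \<longleftrightarrow> (\<forall>p q. \<forall>x\<in>Zr A r p q. f p q x \<in> Br B r p q \<longrightarrow> x \<in> Br A r p q)"

definition E_iso :: "('r, 'a::ab_group_add) mcx \<Rightarrow> ('r, 'b::ab_group_add) mcx
    \<Rightarrow> (int \<Rightarrow> int \<Rightarrow> 'a \<Rightarrow> 'b) \<Rightarrow> nat \<Rightarrow> bool" where
  "E_iso A B f r \<longleftrightarrow> E_surj A B f r \<and> E_inj A B f r"

definition Er_quasi_iso :: "nat \<Rightarrow> ('r, 'a::ab_group_add) mcx \<Rightarrow> ('r, 'b::ab_group_add) mcx
    \<Rightarrow> (int \<Rightarrow> int \<Rightarrow> 'a \<Rightarrow> 'b) \<Rightarrow> bool" where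
  "Er_quasi_iso r A B f \<longleftrightarrow> mc_morphism A B f \<and> E_iso A B f (Suc r)"

definition r_fibration :: "nat \<Rightarrow> ('r, 'a::ab_group_add) mcx \<Rightarrow> ('r, 'b::ab_group_add) mcx
    \<Rightarrow> (int \<Rightarrow> int \<Rightarrow> 'a \<Rightarrow> 'b) \<Rightarrow> bool" where
  "r_fibration r A B f \<longleftrightarrow> mc_morphism A B f \<and> (\<forall>i\<le>r. E_surj A B f i)"

definition mc_sum :: "('r, 'a::ab_group_add) mcx \<Rightarrow> ('r, 'b::ab_group_add) mcx \<Rightarrow> ('r, 'a \<times> 'b) mcx" where
  "mc_sum A B = \<lparr> car = (\<lambda>p q. car A p q \<times> car B p q),
                  smul = (\<lambda>c xy. (smul A c (fst xy), smul B c (snd xy))),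
                  dd = (\<lambda>k p q xy. (dd A k p q (fst xy), dd B k p q (snd xy))) \<rparr>"

text \<open>Tensor product L \<otimes> A where L is the free multicomplex over R with finite basis S,
  basis element b of bidegree deg b, and d_k b = sum_c (coef k b c) c.
  (L \<otimes> A)^{p,q} = direct sum over b in S of b \<otimes> A^{p - deg b}, elements represented
  as functions S -> A; d_k(b \<otimes> a) = d_k b \<otimes> a + (-1)^{<(-k,1-k), deg b>} b \<otimes> d_k a.\<close>
definition free_tensor :: "'b set \<Rightarrow> ('b \<Rightarrow> int \<times> int) \<Rightarrow> (nat \<Rightarrow> 'b \<Rightarrow> 'b \<Rightarrow> int)
    \<Rightarrow> ('r::comm_ring_1, 'a::ab_group_add) mcx \<Rightarrow> ('r, 'b \<Rightarrow> 'a) mcx" where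
  "free_tensor S deg coef A =
    \<lparr> car = (\<lambda>p q. {x. (\<forall>b\<in>S. x b \<in> car A (p - fst (deg b)) (q - snd (deg b)))
                        \<and> (\<forall>b. b \<notin> S \<longrightarrow> x b = 0)}),
      smul = (\<lambda>c x b. smul A c (x b)),
      dd = (\<lambda>k p q x g. if g \<in> S then
                 (\<Sum>b\<in>S. smul A (of_int (coef k b g)) (x b))
               + isgn (- int k * fst (deg g) + (1 - int k) * snd (deg g))
                      (dd A k (p - fst (deg g)) (q - snd (deg g)) (x g))
             else 0) \<rparr>"

text \<open>Basis: LMinus = beta_-, LDiag i = beta_{-i,-i}, LOff i = beta_{-i-1,-i},
  L01 = beta_{0,1} (only used for r = 0).\<close>
datatype lbasis = LMinus | LDiag nat | LOff nat | L01

definition lam_basis :: "nat \<Rightarrow> lbasis set" where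
  "lam_basis r = (if r = 0 then {LMinus, LDiag 0, L01}
                  else insert LMinus (LDiag ` {..<r} \<union> LOff ` {..<r}))"

fun lam_deg :: "lbasis \<Rightarrow> int \<times> int" where
  "lam_deg LMinus = (0, 0)"
| "lam_deg (LDiag i) = (- int i, - int i)"
| "lam_deg (LOff i) = (- int i - 1, - int i)"
| "lam_deg L01 = (0, 1)"

definition lam_coef :: "nat \<Rightarrow> nat \<Rightarrow> lbasis \<Rightarrow> lbasis \<Rightarrow> int" where
  "lam_coef r k b c =
    (if r = 0 then
       (if k = 0 \<and> b = LMinus \<and> c = L01 then -1
        else if k = 0 \<and> b = LDiag 0 \<and> c = L01 then 1 else 0)
     else
       (if k = 1 \<and> b = LMinus \<and> c = LOff 0 then -1
        else if k = 1 \<and> (\<exists>i<r. b = LDiag i \<and> c = LOff i) then 1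
        else if k = 0 \<and> (\<exists>i. 1 \<le> i \<and> i < r \<and> b = LDiag i \<and> c = LOff (i - 1)) then 1
        else 0))"

definition Pr :: "nat \<Rightarrow> ('r::comm_ring_1, 'a::ab_group_add) mcx \<Rightarrow> ('r, lbasis \<Rightarrow> 'a) mcx" where
  "Pr r A = free_tensor (lam_basis r) lam_deg (lam_coef r) A"

definition iotaA :: "int \<Rightarrow> int \<Rightarrow> 'a::zero \<Rightarrow> lbasis \<Rightarrow> 'a" where
  "iotaA p q a = (\<lambda>b. if b = LMinus \<or> b = LDiag 0 then a else 0)"

definition piA :: "int \<Rightarrow> int \<Rightarrow> (lbasis \<Rightarrow> 'a) \<Rightarrow> 'a \<times> 'a" where
  "piA p q x = (x LMinus, x (LDiag 0))"

definition diagA :: "int \<Rightarrow> int \<Rightarrow> 'a \<Rightarrow> 'a \<times> 'a" where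
  "diagA p q a = (a, a)"

end

theory Submission
  imports Defs
begin

text \<open>Everything is checked on the finite basis of \<open>\<Lambda>\<^sub>r\<close>: an element of
    \<open>P\<^sub>r(A) = \<Lambda>\<^sub>r \<otimes> A\<close>
  is a family of elements of \<open>A\<close> indexed by that basis, and its structure maps are written out
  componentwise, so that the multicomplex relations of \<open>P\<^sub>r(A)\<close> reduce to those of \<open>A\<close>.
  Projection onto the \<open>\<beta>\<^sub>-\<close>-component is a retraction of
      \<open>\<iota>\<^sub>A\<close>, and an explicit
  \<open>r\<close>-homotopy, which moves the off-diagonal components back onto the diagonal ones, connects
  the other composite with the identity; \<open>r\<close>-homotopic morphisms agree on
      \<open>E\<^bsub>r+1\<^esub>\<close>, so
  \<open>\<iota>\<^sub>A\<close> is an \<open>E\<^sub>r\<close>-quasi-isomorphism. For the fibration property a pair of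
  \<open>Z\<^sub>k\<close>-witnesses \<open>(a, a')\<close> in \<open>A \<oplus> A\<close>, \<open>k
      \<le> r\<close>, lifts exactly to \<open>P\<^sub>r(A)\<close> by placing
  \<open>a\<close>, \<open>a'\<close> on \<open>\<beta>\<^sub>-\<close>,
      \<open>\<beta>\<^bsub>0,0\<^esub>\<close> and the shifted differences \<open>a' - a\<close> along
          the diagonal.\<close>

lemma sgnf_0 [simp]: "sgnf 0 x = x"
  by (simp add: sgnf_def)

lemma sgnf_Suc: "sgnf (Suc i) x = - sgnf i x"
  by (simp add: sgnf_def)

lemma sgnf_1 [simp]: "sgnf 1 x = - x" and sgnf_Suc_0 [simp]: "sgnf (Suc 0) x = - x"
  by (simp_all add: sgnf_def)

lemma sgnf_zero [simp]: "sgnf i 0 = 0"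
  by (simp add: sgnf_def)

lemma sgnf_add: "sgnf i (x + y) = sgnf i x + sgnf i y"
  by (simp add: sgnf_def)

lemma sgnf_diff: "sgnf i (x - y) = sgnf i x - sgnf i y"
  by (simp add: sgnf_def)

lemma sgnf_sgnf: "sgnf i (sgnf j x) = sgnf (i + j) x"
  by (simp add: sgnf_def)

lemma sgnf_sgnf_same: "sgnf i (sgnf i x) = x"
  by (simp add: sgnf_def)

lemma sgnf_cong: "even i = even j \<Longrightarrow> sgnf i x = sgnf j x"
  by (simp add: sgnf_def)

lemma sgnf_even: "even i \<Longrightarrow> sgnf i x = x" and sgnf_odd: "odd i \<Longrightarrow> sgnf i x = - x"
  by (simp_all add: sgnf_def)

lemma sgnf_add_opposite: "odd (i + j) \<Longrightarrow> sgnf i x + sgnf j x = 0"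
  by (auto simp: sgnf_def)

lemma sgnf_sum: "sgnf i (sum f A) = (\<Sum>a\<in>A. sgnf i (f a))"
  by (simp add: sgnf_def sum_negf)

lemma sgnf_apply: "sgnf i f x = sgnf i (f x)"
  by (simp add: sgnf_def)

lemma sgnf_Pair: "sgnf i (x, y) = (sgnf i x, sgnf i y)"
  by (simp add: sgnf_def)

lemma isgn_int: "isgn (int i) x = sgnf i x"
  by (simp add: isgn_def sgnf_def)

lemma isgn_0 [simp]: "isgn 0 x = x"
  by (simp add: isgn_def)

lemma isgn_cong: "even k = even l \<Longrightarrow> isgn k x = isgn l x"
  by (simp add: isgn_def)

lemma sum_apply: "finite A \<Longrightarrow> sum f A x = (\<Sum>a\<in>A. f a x)"
  by (induction A rule: finite_induct) auto

lemma sum_atMost_rev: "(\<Sum>i\<le>(m::nat). f (m - i)) = (\<Sum>i\<le>m. f i)"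
  using sum.atLeastAtMost_rev[of f 0 m] by (simp add: atMost_atLeast0)

lemma sum_atMost_if_diff_eq_1:
  "(\<Sum>i\<le>(m::nat). if m - i = 1 \<and> P i then f i else 0) = (if 1 \<le> m \<and> P (m - 1) then
      f (m - 1) else 0)"
proof -
  have "(\<Sum>i\<le>m. if m - i = 1 \<and> P i then f i else 0)
      = (\<Sum>i\<le>m. if i = m - 1 then (if 1 \<le> m \<and> P i then f i else 0) else 0)"
    by (rule sum.cong) auto
  then show ?thesis by (simp add: sum.delta')
qed

lemma sum_atMost_if_diff_eq_0:
  "(\<Sum>i\<le>(m::nat). if m - i = 0 \<and> P i then f i else 0) = (if P m then f m else 0)"
proof -
  have "(\<Sum>i\<le>m. if m - i = 0 \<and> P i then f i else 0) = (\<Sum>i\<le>m. if i = m then (if P i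
      then f i else 0) else 0)"
    by (rule sum.cong) auto
  then show ?thesis by (simp add: sum.delta')
qed

lemma sum_atMost_shift:
  assumes "t \<le> (l::nat)"
  shows "(\<Sum>j\<le>l. if t \<le> j then f (j - t) else 0) = (\<Sum>j\<le>l - t. f j)"
proof -
  have "(\<Sum>j\<le>l. if t \<le> j then f (j - t) else 0) = (\<Sum>j\<in>{j \<in> {..l}. t \<le> j}. f (j - t))"
    by (rule sum.inter_filter[symmetric]) simp
  also have "{j \<in> {..l}. t \<le> j} = {0 + t..(l - t) + t}"
    using assms by auto
  also have "(\<Sum>j\<in>{0 + t..(l - t) + t}. f (j - t)) = (\<Sum>j\<in>{0..l - t}. f (j + t - t))"
    by (rule sum.shift_bounds_cl_nat_ivl)
  finally show ?thesis
    by (simp add: atMost_atLeast0)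
qed

lemma sum_atMost_reflect: "(\<Sum>i\<le>(l::nat). g i (l - i)) = (\<Sum>j\<le>l. g (l - j) j)"
proof -
  have "(\<Sum>i\<le>l. g i (l - i)) = (\<Sum>i\<le>l. g (l - (l - i)) (l - i))"
    by (intro sum.cong) auto
  also have "\<dots> = (\<Sum>j\<le>l. g (l - j) j)"
    by (rule sum_atMost_rev)
  finally show ?thesis .
qed

lemma sum_atMost_triangle_swap:
  "(\<Sum>i\<le>l. \<Sum>j\<le>l - i. f i j) = (\<Sum>j\<le>(l::nat). \<Sum>i\<le>l - j. f i j)"
proof -
  have "(\<Sum>i\<le>l. \<Sum>j\<le>l - i. f i j) = (\<Sum>i\<in>{..l}. \<Sum>j\<in>{j. j \<in> {..l}
      \<and> i + j \<le> l}. f i j)"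
    by (intro sum.cong) auto
  also have "\<dots> = (\<Sum>j\<in>{..l}. \<Sum>i\<in>{i. i \<in> {..l} \<and> i + j \<le> l}. f i j)"
    by (rule sum.swap_restrict) auto
  also have "\<dots> = (\<Sum>j\<le>l. \<Sum>i\<le>l - j. f i j)"
    by (intro sum.cong) auto
  finally show ?thesis .
qed

lemma rmodule_on_zero: "rmodule_on s S \<Longrightarrow> 0 \<in> S"
  and rmodule_on_add: "rmodule_on s S \<Longrightarrow> x \<in> S \<Longrightarrow> y \<in> S
      \<Longrightarrow> x + y \<in> S"
  and rmodule_on_minus: "rmodule_on s S \<Longrightarrow> x \<in> S \<Longrightarrow> - x \<in> S"
  and rmodule_on_smul: "rmodule_on s S \<Longrightarrow> x \<in> S \<Longrightarrow> s c x \<in> S"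
  and rmodule_on_smul_one: "rmodule_on s S \<Longrightarrow> x \<in> S \<Longrightarrow> s 1 x = x"
  by (simp_all add: rmodule_on_def)

lemma rmodule_on_smul_mult: "rmodule_on s S \<Longrightarrow> x \<in> S \<Longrightarrow> s (a * b) x = s a (s b x)"
  and rmodule_on_smul_left_distrib: "rmodule_on s S \<Longrightarrow> x \<in> S \<Longrightarrow> s (a +
      b) x = s a x + s b x"
  by (simp_all add: rmodule_on_def)

lemma rmodule_on_diff: "rmodule_on s S \<Longrightarrow> x \<in> S \<Longrightarrow> y \<in> S
    \<Longrightarrow> x - y \<in> S"
  by (metis diff_conv_add_uminus rmodule_on_add rmodule_on_minus)

lemma rmodule_on_sum: "rmodule_on s S \<Longrightarrow> (\<And>i. i \<in> I \<Longrightarrow> f i \<in>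
    S) \<Longrightarrow> sum f I \<in> S"
  by (induction I rule: infinite_finite_induct) (simp_all add: rmodule_on_zero rmodule_on_add)

lemma rmodule_on_smul_zero:
  assumes "rmodule_on s S" "x \<in> S"
  shows "s 0 x = 0"
proof -
  have "s (0 + 0) x = s 0 x + s 0 x"
    using assms unfolding rmodule_on_def by blast
  then show ?thesis by simp
qed

lemma rmodule_on_smul_minus_one:
  assumes "rmodule_on s S" "x \<in> S"
  shows "s (-1) x = - x"
proof -
  have "s (-1 + 1) x = s (-1) x + s 1 x"
    using assms unfolding rmodule_on_def by blast
  then have "0 = s (-1) x + x"
    using assms by (simp add: rmodule_on_smul_zero rmodule_on_smul_one)
  then show ?thesis by (simp add: eq_neg_iff_add_eq_0)
qed

lemma lin_on_add: "lin_on s t S f \<Longrightarrow> x \<in> S \<Longrightarrow> y \<in> S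
    \<Longrightarrow> f (x + y) = f x + f y"
  by (simp add: lin_on_def)

lemma lin_on_zero:
  assumes "rmodule_on s S" "lin_on s t S f"
  shows "f 0 = 0"
  using lin_on_add[OF assms(2) rmodule_on_zero[OF assms(1)] rmodule_on_zero[OF assms(1)]] by simp

lemma lin_on_minus:
  assumes "rmodule_on s S" "lin_on s t S f" "x \<in> S"
  shows "f (- x) = - f x"
proof -
  have "f x + f (- x) = 0"
    using lin_on_add[OF assms(2,3) rmodule_on_minus[OF assms(1,3)]] lin_on_zero[OF assms(1,2)] by simp
  then show ?thesis by (metis add.commute eq_neg_iff_add_eq_0)
qed

lemma lin_on_diff: "rmodule_on s S \<Longrightarrow> lin_on s t S f \<Longrightarrow> x \<in> S
    \<Longrightarrow> y \<in> S \<Longrightarrow> f (x - y) = f x - f y"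
  by (metis diff_conv_add_uminus lin_on_add lin_on_minus rmodule_on_minus)

lemma lin_on_sgnf: "rmodule_on s S \<Longrightarrow> lin_on s t S f \<Longrightarrow> x \<in> S
    \<Longrightarrow> f (sgnf i x) = sgnf i (f x)"
  using lin_on_minus[of s S t f x] by (simp add: sgnf_def)

lemma lin_on_sum:
  assumes "rmodule_on s S" "lin_on s t S f"
  shows "(\<And>i. i \<in> I \<Longrightarrow> g i \<in> S) \<Longrightarrow> f (sum g I) = (\<Sum>i\<in>I. f (g i))"
proof (induction I rule: infinite_finite_induct)
  case (insert i I)
  then have "f (sum g (insert i I)) = f (g i) + f (sum g I)"
    by (simp add: lin_on_add[OF assms(2)] rmodule_on_sum[OF assms(1)])
  then show ?case using insert by simp
qed (simp_all add: lin_on_zero[OF assms])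

lemma car_index_cong: "x \<in> car A p q \<Longrightarrow> p = p' \<Longrightarrow> q = q'
    \<Longrightarrow> x \<in> car A p' q'"
  by simp

locale mcomplex =
  fixes n :: enat and A :: "('r::comm_ring_1, 'a::ab_group_add) mcx"
  assumes multicomplex: "multicomplex n A"
begin

lemma rmodule: "rmodule_on (smul A) (car A p q)"
  and dd_car: "x \<in> car A p q \<Longrightarrow> dd A i p q x \<in> car A (p - int i) (q + 1 - int i)"
  and dd_lin: "lin_on (smul A) (smul A) (car A p q) (dd A i p q)"
  and dd_high: "n \<le> enat i \<Longrightarrow> x \<in> car A p q \<Longrightarrow> dd A i p q x = 0"
  and dd_rel: "x \<in> car A p q \<Longrightarrow>
     (\<Sum>j\<le>l. sgnf (l - j) (dd A (l - j) (p - int j) (q + 1 - int j) (dd A j p q x))) = 0"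
  using multicomplex by (simp_all add: multicomplex_def)

lemma car_zero [simp]: "0 \<in> car A p q"
  by (rule rmodule_on_zero[OF rmodule])

lemma car_add: "x \<in> car A p q \<Longrightarrow> y \<in> car A p q \<Longrightarrow> x + y \<in> car A p q"
  by (rule rmodule_on_add[OF rmodule])

lemma car_minus: "x \<in> car A p q \<Longrightarrow> - x \<in> car A p q"
  by (rule rmodule_on_minus[OF rmodule])

lemma car_diff: "x \<in> car A p q \<Longrightarrow> y \<in> car A p q \<Longrightarrow> x - y \<in> car A p q"
  by (rule rmodule_on_diff[OF rmodule])

lemma car_sum: "(\<And>j. j \<in> I \<Longrightarrow> g j \<in> car A p q) \<Longrightarrow> sum g I \<in> car A p q"
  by (rule rmodule_on_sum[OF rmodule])

lemma car_sgnf: "x \<in> car A p q \<Longrightarrow> sgnf k x \<in> car A p q"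
  by (simp add: sgnf_def car_minus)

lemma dd_zero [simp]: "dd A i p q 0 = 0"
  by (rule lin_on_zero[OF rmodule dd_lin])

lemma dd_add: "x \<in> car A p q \<Longrightarrow> y \<in> car A p q \<Longrightarrow> dd A i p q (x +
    y) = dd A i p q x + dd A i p q y"
  by (rule lin_on_add[OF dd_lin])

lemma dd_diff: "x \<in> car A p q \<Longrightarrow> y \<in> car A p q \<Longrightarrow> dd A i p q (x -
    y) = dd A i p q x - dd A i p q y"
  by (rule lin_on_diff[OF rmodule dd_lin])

lemma dd_minus: "x \<in> car A p q \<Longrightarrow> dd A i p q (- x) = - dd A i p q x"
  by (rule lin_on_minus[OF rmodule dd_lin])

lemma dd_sgnf: "x \<in> car A p q \<Longrightarrow> dd A i p q (sgnf k x) = sgnf k (dd A i p q x)"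
  by (rule lin_on_sgnf[OF rmodule dd_lin])

lemma dd_sum: "(\<And>j. j \<in> I \<Longrightarrow> g j \<in> car A p q) \<Longrightarrow> dd A i p q
    (sum g I) = (\<Sum>j\<in>I. dd A i p q (g j))"
  by (rule lin_on_sum[OF rmodule dd_lin])

lemma dd_smul: "x \<in> car A p q \<Longrightarrow> dd A i p q (smul A c x) = smul A c (dd A i p q x)"
  using dd_lin unfolding lin_on_def by blast

lemma smul_add: "x \<in> car A p q \<Longrightarrow> y \<in> car A p q \<Longrightarrow> smul A c (x +
    y) = smul A c x + smul A c y"
  using rmodule unfolding rmodule_on_def by blast

lemma smul_lin: "lin_on (smul A) (smul A) (car A p q) (smul A c)"
proof -
  have "smul A c' (smul A c x) = smul A c (smul A c' x)" if "x \<in> car A p q" for c' x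
  proof -
    have "smul A c' (smul A c x) = smul A (c' * c) x"
      using that rmodule unfolding rmodule_on_def by metis
    also have "\<dots> = smul A c (smul A c' x)"
      using that rmodule unfolding rmodule_on_def by (metis mult.commute)
    finally show ?thesis .
  qed
  then show ?thesis unfolding lin_on_def using smul_add by auto
qed

lemma smul_zero [simp]: "smul A c 0 = 0"
  by (rule lin_on_zero[OF rmodule[of 0 0] smul_lin])

lemma smul_minus: "x \<in> car A p q \<Longrightarrow> smul A c (- x) = - smul A c x"
  by (rule lin_on_minus[OF rmodule smul_lin])

lemma smul_diff: "x \<in> car A p q \<Longrightarrow> y \<in> car A p q \<Longrightarrow> smul A c (x -
    y) = smul A c x - smul A c y"
  by (rule lin_on_diff[OF rmodule smul_lin])

lemma smul_sgnf: "x \<in> car A p q \<Longrightarrow> smul A c (sgnf j x) = sgnf j (smul A c x)"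
  by (rule lin_on_sgnf[OF rmodule smul_lin])

end

section \<open>The path object\<close>

lemma lam_basis_simps [simp]: "LMinus \<in> lam_basis r" "LDiag j \<in> lam_basis r
    \<longleftrightarrow> j = 0 \<or> j < r"
  "LOff i \<in> lam_basis r \<longleftrightarrow> i < r" "L01 \<in> lam_basis r \<longleftrightarrow> r = 0"
  by (auto simp: lam_basis_def)

lemma finite_lam_basis [simp]: "finite (lam_basis r)"
  by (simp add: lam_basis_def)

lemma car_Pr: "x \<in> car (Pr r A) p q \<longleftrightarrow>
   (\<forall>b\<in>lam_basis r. x b \<in> car A (p - fst (lam_deg b)) (q - snd (lam_deg b))) \<and>
       (\<forall>b. b \<notin> lam_basis r \<longrightarrow> x b = 0)"
  by (simp add: Pr_def free_tensor_def)

lemma smul_Pr [simp]: "smul (Pr r A) c x = (\<lambda>b. smul A c (x b))"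
  by (simp add: Pr_def free_tensor_def)

lemma car_Pr_outside: "x \<in> car (Pr r A) p q \<Longrightarrow> b \<notin> lam_basis r \<Longrightarrow> x b = 0"
  unfolding car_Pr by simp

text \<open>The structure maps of \<open>free_tensor\<close> written out on the basis of
    \<open>\<Lambda>\<^sub>r\<close>: the terms coming
  from \<open>lam_coef\<close>, and the Koszul sign \<open>(-1)^\<langle>(-k,1-k), deg
      b\<rangle>\<close> evaluated at each basis element.\<close>
definition Pr_dd ::
    "nat \<Rightarrow> ('r::comm_ring_1, 'a::ab_group_add) mcx \<Rightarrow> nat \<Rightarrow> int
        \<Rightarrow> int \<Rightarrow> (lbasis \<Rightarrow> 'a) \<Rightarrow> lbasis \<Rightarrow> 'a" where
  "Pr_dd r A k p q x g = (if g \<notin> lam_basis r then 0 else (case g of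
     LMinus \<Rightarrow> dd A k p q (x LMinus)
   | LDiag j \<Rightarrow> sgnf j (dd A k (p + int j) (q + int j) (x (LDiag j)))
   | LOff i \<Rightarrow> (if k = 1 then x (LDiag i) - (if i = 0 then x LMinus else 0) else 0)
              + (if k = 0 \<and> i + 1 < r then x (LDiag (i + 1)) else 0)
              + sgnf (k + i) (dd A k (p + int i + 1) (q + int i) (x (LOff i)))
   | L01 \<Rightarrow> (if k = 0 then x (LDiag 0) - x LMinus else 0) + sgnf (k + 1) (dd A k p (q - 1) (x L01))))"

lemma Pr_dd_Minus [simp]: "Pr_dd r A k p q x LMinus = dd A k p q (x LMinus)"
  by (simp add: Pr_dd_def)

lemma Pr_dd_Diag:
  "j = 0 \<or> j < r \<Longrightarrow> Pr_dd r A k p q x (LDiag j) = sgnf j (dd A k (p + int j) (q + int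
      j) (x (LDiag j)))"
  by (simp add: Pr_dd_def)

lemma Pr_dd_Off:
  "i < r \<Longrightarrow> Pr_dd r A k p q x (LOff i) =
      (if k = 1 then x (LDiag i) - (if i = 0 then x LMinus else 0) else 0)
    + (if k = 0 \<and> i + 1 < r then x (LDiag (i + 1)) else 0)
    + sgnf (k + i) (dd A k (p + int i + 1) (q + int i) (x (LOff i)))"
  by (simp add: Pr_dd_def)

lemma Pr_dd_01:
  "r = 0 \<Longrightarrow> Pr_dd r A k p q x L01 =
    (if k = 0 then x (LDiag 0) - x LMinus else 0) + sgnf (k + 1) (dd A k p (q - 1) (x L01))"
  by (simp add: Pr_dd_def)

lemma Pr_dd_outside: "g \<notin> lam_basis r \<Longrightarrow> Pr_dd r A k p q x g = 0"
  by (simp add: Pr_dd_def)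

context mcomplex
begin

lemma car_Pr_component: "x \<in> car (Pr r A) p q \<Longrightarrow> x b \<in> car A (p - fst (lam_deg
    b)) (q - snd (lam_deg b))"
  by (cases "b \<in> lam_basis r") (auto simp: car_Pr)

lemma car_Pr_Minus: "x \<in> car (Pr r A) p q \<Longrightarrow> x LMinus \<in> car A p q"
  using car_Pr_component[of x r p q LMinus] by simp

lemma car_Pr_Diag: "x \<in> car (Pr r A) p q \<Longrightarrow> x (LDiag j) \<in> car A (p + int j) (q + int j)"
  using car_Pr_component[of x r p q "LDiag j"] by simp

lemma car_Pr_Off: "x \<in> car (Pr r A) p q \<Longrightarrow> x (LOff i) \<in> car A (p + int i + 1) (q + int i)"
  using car_Pr_component[of x r p q "LOff i"] by (simp add: algebra_simps)

lemma car_Pr_01: "x \<in> car (Pr r A) p q \<Longrightarrow> x L01 \<in> car A p (q - 1)"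
  using car_Pr_component[of x r p q L01] by simp

lemma smul_of_int:
  assumes "y \<in> car A p q"
  shows "smul A (of_int c) y = (if c = 1 then y else if c = -1 then - y else if c = 0 then 0 else smul A (of_int c) y)"
  using rmodule_on_smul_zero[OF rmodule assms] rmodule_on_smul_one[OF rmodule assms]
      rmodule_on_smul_minus_one[OF rmodule assms]
  by auto

lemma lam_coef_sum:
  assumes x: "x \<in> car (Pr r A) p q" and g: "g \<in> lam_basis r"
  shows "(\<Sum>b\<in>lam_basis r. smul A (of_int (lam_coef r k b g)) (x b)) =
     (case g of LOff i \<Rightarrow> (if k = 1 then x (LDiag i) - (if i = 0 then x LMinus else 0) else 0)
              + (if k = 0 \<and> i + 1 < r then x (LDiag (i + 1)) else 0)
     | L01 \<Rightarrow> (if k = 0 then x (LDiag 0) - x LMinus else 0) | _ \<Rightarrow> 0)"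
proof -
  have inS: "\<And>b. b \<in> lam_basis r \<Longrightarrow> \<exists>p' q'. x b \<in> car A p' q'"
    using car_Pr_component[OF x] by blast
  have sm: "\<And>b c. b \<in> lam_basis r \<Longrightarrow> smul A (of_int c) (x b) =
      (if c = 1 then x b else if c = -1 then - x b else if c = 0 then 0 else smul A (of_int c) (x b))"
    using inS smul_of_int by blast
  show ?thesis
  proof (cases g)
    case LMinus
    then have "\<And>b. b \<in> lam_basis r \<Longrightarrow> smul A (of_int (lam_coef r k b g)) (x b) = 0"
      by (simp add: sm lam_coef_def)
    then show ?thesis using LMinus by simp
  next
    case (LDiag j)
    then have "\<And>b. b \<in> lam_basis r \<Longrightarrow> smul A (of_int (lam_coef r k b g)) (x b) = 0"
      by (simp add: sm lam_coef_def)
    then show ?thesis using LDiag by simp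
  next
    case (LOff i)
    with g have ir: "i < r" by simp
    have "\<And>b. b \<in> lam_basis r \<Longrightarrow> smul A (of_int (lam_coef r k b g)) (x b) =
       (if b = LDiag i then (if k = 1 then x b else 0) else 0)
     + (if b = LMinus then (if k = 1 \<and> i = 0 then - x b else 0) else 0)
     + (if b = LDiag (i + 1) then (if k = 0 \<and> i + 1 < r then x b else 0) else 0)"
      using ir LOff by (auto simp: sm lam_coef_def)
    then have "(\<Sum>b\<in>lam_basis r. smul A (of_int (lam_coef r k b g)) (x b)) =
       (\<Sum>b\<in>lam_basis r. (if b = LDiag i then (if k = 1 then x b else 0) else 0)
     + (if b = LMinus then (if k = 1 \<and> i = 0 then - x b else 0) else 0)
     + (if b = LDiag (i + 1) then (if k = 0 \<and> i + 1 < r then x b else 0) else 0))"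
      by (rule sum.cong[OF refl])
    also have "\<dots> = (if k = 1 then x (LDiag i) else 0) + (if k = 1 \<and> i = 0 then - x LMinus else 0)
       + (if k = 0 \<and> i + 1 < r then x (LDiag (i + 1)) else 0)"
      using ir by (simp add: sum.distrib sum.delta)
    finally show ?thesis using LOff by simp
  next
    case L01
    with g have r0: "r = 0" by simp
    have "\<And>b. b \<in> lam_basis r \<Longrightarrow> smul A (of_int (lam_coef r k b g)) (x b) =
       (if b = LDiag 0 then (if k = 0 then x b else 0) else 0)
     + (if b = LMinus then (if k = 0 then - x b else 0) else 0)"
      using r0 L01 by (auto simp: sm lam_coef_def)
    then have "(\<Sum>b\<in>lam_basis r. smul A (of_int (lam_coef r k b g)) (x b)) =
       (\<Sum>b\<in>lam_basis r. (if b = LDiag 0 then (if k = 0 then x b else 0) else 0)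
     + (if b = LMinus then (if k = 0 then - x b else 0) else 0))"
      by (rule sum.cong[OF refl])
    also have "\<dots> = (if k = 0 then x (LDiag 0) else 0) + (if k = 0 then - x LMinus else 0)"
      by (simp add: sum.distrib sum.delta)
    finally show ?thesis using L01 by simp
  qed
qed

lemma dd_Pr:
  assumes x: "x \<in> car (Pr r A) p q"
  shows "dd (Pr r A) k p q x = Pr_dd r A k p q x"
proof
  fix g
  show "dd (Pr r A) k p q x g = Pr_dd r A k p q x g"
  proof (cases "g \<in> lam_basis r")
    case False then show ?thesis by (simp add: Pr_def free_tensor_def Pr_dd_def)
  next
    case True
    have cs: "dd (Pr r A) k p q x g = (\<Sum>b\<in>lam_basis r. smul A (of_int (lam_coef r k b g)) (x b))
       + isgn (- int k * fst (lam_deg g) + (1 - int k) * snd (lam_deg g))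
            (dd A k (p - fst (lam_deg g)) (q - snd (lam_deg g)) (x g))"
      using True by (simp add: Pr_def free_tensor_def)
    show ?thesis
    proof (cases g)
      case LMinus then show ?thesis using cs lam_coef_sum[OF x True] by (simp add: Pr_dd_def)
    next
      case (LDiag j)
      have "isgn (- int k * fst (lam_deg g) + (1 - int k) * snd (lam_deg g)) y = sgnf j y" for y
        unfolding LDiag isgn_int[symmetric] by (rule isgn_cong) (simp add: algebra_simps)
      then show ?thesis using cs lam_coef_sum[OF x True] True LDiag by (simp add: Pr_dd_def)
    next
      case (LOff i)
      have sg: "isgn (- int k * fst (lam_deg (LOff i)) + (1 - int k) * snd (lam_deg (LOff i))) y = sgnf (k + i) y" for y
        unfolding isgn_int[symmetric] by (rule isgn_cong) (simp add: algebra_simps)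
      have e1: "p - fst (lam_deg (LOff i)) = p + int i + 1" and e2: "q - snd (lam_deg (LOff i)) = q + int i" by simp_all
      have "dd (Pr r A) k p q x g = (\<Sum>b\<in>lam_basis r. smul A (of_int (lam_coef r k b g)) (x b))
         + sgnf (k + i) (dd A k (p + int i + 1) (q + int i) (x (LOff i)))"
        unfolding cs unfolding LOff e1 e2 sg ..
      then show ?thesis using lam_coef_sum[OF x True] True LOff by (simp add: Pr_dd_def)
    next
      case L01
      have "isgn (- int k * fst (lam_deg g) + (1 - int k) * snd (lam_deg g)) y = sgnf (k + 1) y" for y
        unfolding L01 isgn_int[symmetric] by (rule isgn_cong) (simp add: algebra_simps)
      then show ?thesis using cs lam_coef_sum[OF x True] True L01 by (simp add: Pr_dd_def)
    qed
  qed
qed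

lemma Pr_rmodule: "rmodule_on (smul (Pr r A)) (car (Pr r A) p q)"
  unfolding rmodule_on_def
proof (intro conjI ballI allI)
  fix x y a b
  assume x: "x \<in> car (Pr r A) p q" and y: "y \<in> car (Pr r A) p q"
  note cx = car_Pr_component[OF x] and cy = car_Pr_component[OF y]
  show "x + y \<in> car (Pr r A) p q" "- x \<in> car (Pr r A) p q" "smul (Pr r A) a x \<in> car (Pr r A) p q"
    using x y by (auto simp: car_Pr car_add car_minus rmodule_on_smul[OF rmodule])
  show "smul (Pr r A) (a * b) x = smul (Pr r A) a (smul (Pr r A) b x)"
    "smul (Pr r A) 1 x = x"
    "smul (Pr r A) (a + b) x = smul (Pr r A) a x + smul (Pr r A) b x"
    "smul (Pr r A) a (x + y) = smul (Pr r A) a x + smul (Pr r A) a y"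
    using rmodule_on_smul_mult[OF rmodule cx] rmodule_on_smul_one[OF rmodule cx]
      rmodule_on_smul_left_distrib[OF rmodule cx] smul_add[OF cx cy]
    by (simp_all add: fun_eq_iff)
qed (simp add: car_Pr)

lemma dd_Pr_car:
  assumes x: "x \<in> car (Pr r A) p q"
  shows "dd (Pr r A) i p q x \<in> car (Pr r A) (p - int i) (q + 1 - int i)"
proof -
  note c = car_Pr_component[OF x]
  have "Pr_dd r A i p q x g \<in> car A (p - int i - fst (lam_deg g)) (q + 1 - int i - snd (lam_deg g))" for g
  proof (cases g)
    case (LOff a)
    then show ?thesis
      using c[of LMinus] c[of "LDiag a"] c[of "LDiag (a + 1)"] dd_car[OF c[of g], of i]
      by (auto simp: Pr_dd_def algebra_simps intro!: car_add car_diff car_sgnf)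
  next
    case L01
    then show ?thesis
      using c[of LMinus] c[of "LDiag 0"] dd_car[OF c[of g], of i]
      by (auto simp: Pr_dd_def algebra_simps intro!: car_add car_diff car_sgnf)
  qed (use dd_car[OF c[of g], of i] in \<open>auto simp: Pr_dd_def algebra_simps intro!: car_sgnf\<close>)
  then show ?thesis
    unfolding dd_Pr[OF x] car_Pr by (simp add: Pr_dd_outside)
qed

lemma car_Pr_add: "x \<in> car (Pr r A) p q \<Longrightarrow> y \<in> car (Pr r A) p q \<Longrightarrow>
    x + y \<in> car (Pr r A) p q"
  by (rule rmodule_on_add[OF Pr_rmodule])
lemma car_Pr_smul: "x \<in> car (Pr r A) p q \<Longrightarrow> smul (Pr r A) c x \<in> car (Pr r A) p q"
  by (rule rmodule_on_smul[OF Pr_rmodule])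

lemma dd_Pr_add:
  assumes x: "x \<in> car (Pr r A) p q" and y: "y \<in> car (Pr r A) p q"
  shows "dd (Pr r A) i p q (x + y) = dd (Pr r A) i p q x + dd (Pr r A) i p q y"
proof -
  have "Pr_dd r A i p q (x + y) g = Pr_dd r A i p q x g + Pr_dd r A i p q y g" for g
    using dd_add[OF car_Pr_component[OF x] car_Pr_component[OF y], of i g]
    by (cases g) (auto simp: Pr_dd_def sgnf_add algebra_simps)
  then show ?thesis
    using x y car_Pr_add[OF x y] by (simp add: dd_Pr fun_eq_iff)
qed

lemma dd_Pr_smul:
  assumes x: "x \<in> car (Pr r A) p q"
  shows "dd (Pr r A) i p q (smul (Pr r A) c x) = smul (Pr r A) c (dd (Pr r A) i p q x)"
proof -
  have "Pr_dd r A i p q (\<lambda>b. smul A c (x b)) g = smul A c (Pr_dd r A i p q x g)" for g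
  proof (cases g)
    case LMinus
    then show ?thesis using dd_smul[OF car_Pr_Minus[OF x]] by simp
  next
    case (LDiag j)
    then show ?thesis
      using dd_smul[OF car_Pr_Diag[OF x]] smul_sgnf[OF dd_car[OF car_Pr_Diag[OF x]]]
      by (auto simp: Pr_dd_def)
  next
    case (LOff a)
    show ?thesis
    proof (cases "a < r")
      case True
      then show ?thesis
        using car_Pr_Minus[OF x] car_Pr_Diag[OF x, of a] car_Pr_Diag[OF x, of "a + 1"]
          dd_car[OF car_Pr_Off[OF x], of i a] dd_smul[OF car_Pr_Off[OF x]] smul_sgnf[OF dd_car[OF car_Pr_Off[OF x]]]
        by (auto simp: LOff Pr_dd_Off smul_add smul_diff car_add car_diff car_sgnf dd_car algebra_simps)
    qed (simp add: LOff Pr_dd_outside)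
  next
    case L01
    show ?thesis
    proof (cases "r = 0")
      case True
      show ?thesis
      proof (cases "i = 0")
        case i0: True
        have xD: "x (LDiag 0) \<in> car A p q" and xM: "x LMinus \<in> car A p q"
          and d: "dd A 0 p (q - 1) (x L01) \<in> car A p q"
          using car_Pr_Diag[OF x, of 0] car_Pr_Minus[OF x] dd_car[OF car_Pr_01[OF x], of 0] by simp_all
        show ?thesis
          using i0 True dd_smul[OF car_Pr_01[OF x]]
          by (simp add: L01 Pr_dd_01 smul_diff[OF car_diff[OF xD xM] d] smul_diff[OF xD xM])
      next
        case False
        then show ?thesis
          using True dd_smul[OF car_Pr_01[OF x]] smul_sgnf[OF dd_car[OF car_Pr_01[OF x]]] by (simp add: L01 Pr_dd_01)
      qed
    qed (simp add: L01 Pr_dd_outside)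
  qed
  then show ?thesis
    using car_Pr_smul[OF x] by (simp add: dd_Pr x fun_eq_iff)
qed

lemma dd_Pr_high:
  assumes "2 \<le> n" and ni: "n \<le> enat i" and x: "x \<in> car (Pr r A) p q"
  shows "dd (Pr r A) i p q x = 0"
proof -
  have "2 \<le> i"
    using assms(1,2) by (metis enat_ord_simps(1) numeral_eq_enat order_trans)
  then have "Pr_dd r A i p q x g = 0" for g
    using dd_high[OF ni car_Pr_component[OF x, of g]] by (cases g) (auto simp: Pr_dd_def algebra_simps)
  then show ?thesis
    unfolding dd_Pr[OF x] by (simp add: fun_eq_iff)
qed


text \<open>The \<open>\<beta>\<^bsub>-a-1,-a\<^esub>\<close>-component collects the
    \<open>d\<^sub>1\<close>-image \<open>U\<close> of the diagonal component,
  the \<open>d\<^sub>0\<close>-image \<open>V\<close> of the next diagonal one, and its own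
      \<open>A\<close>-part; the contributions of
  \<open>U\<close> and of \<open>V\<close> cancel in pairs, and the rest is the relation of \<open>A\<close>.\<close>
lemma Pr_dd_rel_Off:
  assumes x: "x \<in> car (Pr r A) p q" and a: "a < r"
  shows "(\<Sum>j\<le>l. sgnf (l - j) (Pr_dd r A (l - j) (p - int j) (q + 1 - int j) (Pr_dd r A j p q x) (LOff a))) = 0"
proof -
  define y where "y j = Pr_dd r A j p q x" for j
  have xD: "x (LDiag a) \<in> car A (p + int a) (q + int a)" using car_Pr_Diag[OF x, of a] a by simp
  have xM: "x LMinus \<in> car A p q" by (rule car_Pr_Minus[OF x])
  have xO: "x (LOff a) \<in> car A (p + int a + 1) (q + int a)" by (rule car_Pr_Off[OF x])
  define U where "U = x (LDiag a) - (if a = 0 then x LMinus else 0)"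
  have Uc: "U \<in> car A (p + int a) (q + int a)" unfolding U_def using xD xM by (auto simp: car_diff)
  define V where "V = (if a + 1 < r then x (LDiag (a + 1)) else 0)"
  have Vc: "V \<in> car A (p + int a + 1) (q + int a + 1)" unfolding V_def using car_Pr_Diag[OF x, of "a+1"]
    by (auto simp: algebra_simps)
  have dU: "sgnf a (dd A k (p + int a) (q + int a) U) = sgnf a (dd A k (p + int a) (q + int a) (x (LDiag a)))
     - (if a = 0 then dd A k p q (x LMinus) else 0)" for k
    unfolding U_def using xD xM by (auto simp: dd_diff sgnf_diff)
  define T where "T (j::nat) = sgnf (l - j) (Pr_dd r A (l - j) (p - int j) (q + 1 - int j) (y j) (LOff a))" for j
  define A1 where "A1 (j::nat) = (if j = l - 1 \<and> 1 \<le> l then - sgnf a (dd A (l - 1) (p + int a)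
      (q + int a) U) else 0)" for j
  define B1 where "B1 (j::nat) = (if j = 1 \<and> 1 \<le> l then sgnf a (dd A (l - 1) (p + int a) (q +
      int a) U) else 0)" for j
  define A2 where "A2 (j::nat) = (if j = l then sgnf (a + 1) (dd A l (p + int a + 1) (q + int a + 1) V) else 0)" for j
  define B2 where "B2 (j::nat) = (if j = 0 then sgnf a (dd A l (p + int a + 1) (q + int a + 1) V) else 0)" for j
  define B3 where "B3 (j::nat) = sgnf l (sgnf (l - j) (dd A (l - j) (p + int a + 1 - int j) (q + int a + 1 - int j)
         (dd A j (p + int a + 1) (q + int a) (x (LOff a)))))" for j
  have Tj: "T j = A1 j + B1 j + A2 j + B2 j + B3 j" if j: "j \<le> l" for j
  proof -
    have yO: "y j (LOff a) = (if j = 1 then U else 0) + (if j = 0 then V else 0)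
        + sgnf (j + a) (dd A j (p + int a + 1) (q + int a) (x (LOff a)))"
      unfolding y_def Pr_dd_Off[OF a] U_def V_def by simp
    have c1: "(if j = 1 then U else 0) \<in> car A (p - int j + int a + 1) (q + 1 - int j + int a)"
      using Uc by auto
    have c2: "(if j = 0 then V else 0) \<in> car A (p - int j + int a + 1) (q + 1 - int j + int a)"
      using Vc by (auto simp: algebra_simps)
    have c3: "sgnf (j + a) (dd A j (p + int a + 1) (q + int a) (x (LOff a))) \<in> car A (p - int j +
        int a + 1) (q + 1 - int j + int a)"
      by (rule car_sgnf, rule car_index_cong[OF dd_car[OF xO]]) simp_all
    have c3': "dd A j (p + int a + 1) (q + int a) (x (LOff a)) \<in> car A (p - int j + int a + 1) (q +
        1 - int j + int a)"
      by (rule car_index_cong[OF dd_car[OF xO]]) simp_all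
    let ?D = "dd A (l - j) (p - int j + int a + 1) (q + 1 - int j + int a)"
    have DyO: "?D (y j (LOff a)) = ?D (if j = 1 then U else 0) + ?D (if j = 0 then V else 0)
        + sgnf (j + a) (?D (dd A j (p + int a + 1) (q + int a) (x (LOff a))))"
      unfolding yO using dd_add[OF car_add[OF c1 c2] c3] dd_add[OF c1 c2] dd_sgnf[OF c3']
      by simp
    have e3: "?D (dd A j (p + int a + 1) (q + int a) (x (LOff a))) = dd A (l - j) (p + int a + 1 - int
        j) (q + int a + 1 - int j)
         (dd A j (p + int a + 1) (q + int a) (x (LOff a)))"
      by (rule arg_cong2[where f="\<lambda>u v. dd A (l - j) u v _"]) simp_all
    have B3e: "sgnf (l - j) (sgnf (l - j + a) (sgnf (j + a) (?D (dd A j (p + int a + 1) (q + int a) (x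
        (LOff a)))))) = B3 j"
      unfolding B3_def e3 sgnf_sgnf by (rule sgnf_cong) (use j in auto)
    have B1e: "sgnf (l - j) (sgnf (l - j + a) (?D (if j = 1 then U else 0))) = B1 j"
    proof (cases "j = 1")
      case True
      then have "sgnf (l - j) (sgnf (l - j + a) (?D (if j = 1 then U else 0))) = sgnf (l - 1 + (l - 1 +
          a)) (dd A (l - 1) (p + int a) (q + int a) U)"
        by (simp add: sgnf_sgnf)
      also have "\<dots> = sgnf a (dd A (l - 1) (p + int a) (q + int a) U)" by (rule sgnf_cong) auto
      finally show ?thesis unfolding B1_def using True j by simp
    qed (simp add: B1_def)
    have B2e: "sgnf (l - j) (sgnf (l - j + a) (?D (if j = 0 then V else 0))) = B2 j"
    proof (cases "j = 0")
      case True
      have e1: "p - int j + int a + 1 = p + int a + 1" "q + 1 - int j + int a = q + int a + 1" "l - j = l"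
        using True by simp_all
      have e: "?D V = dd A l (p + int a + 1) (q + int a + 1) V"
        by (simp only: e1)
      have "sgnf (l - j) (sgnf (l - j + a) (?D (if j = 0 then V else 0))) = sgnf (l + (l + a)) (dd A l
          (p + int a + 1) (q + int a + 1) V)"
        using True e by (simp add: sgnf_sgnf)
      also have "\<dots> = sgnf a (dd A l (p + int a + 1) (q + int a + 1) V)" by (rule sgnf_cong) auto
      finally show ?thesis unfolding B2_def using True by simp
    qed (simp add: B2_def)
    have A1e: "sgnf (l - j) (if l - j = 1 then y j (LDiag a) - (if a = 0 then y j LMinus else 0) else 0) = A1 j"
    proof (cases "l - j = 1")
      case True
      then have jl: "j = l - 1" "1 \<le> l" by auto
      have "y j (LDiag a) - (if a = 0 then y j LMinus else 0) = sgnf a (dd A (l - 1) (p + int a) (q + int a) U)"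
        unfolding y_def dU using a jl by (simp add: Pr_dd_Diag)
      then show ?thesis unfolding A1_def using True jl by simp
    next
      case False
      then have "\<not> (j = l - 1 \<and> 1 \<le> l)" using j by auto
      then show ?thesis unfolding A1_def using False by auto
    qed
    have A2e: "sgnf (l - j) (if l - j = 0 \<and> a + 1 < r then y j (LDiag (a + 1)) else 0) = A2 j"
    proof (cases "j = l")
      case True
      then show ?thesis unfolding A2_def V_def using True
        by (auto simp: y_def Pr_dd_Diag algebra_simps)
    next
      case False
      then show ?thesis unfolding A2_def using j by simp
    qed
    have "T j = A1 j + A2 j + (B1 j + B2 j + B3 j)"
      unfolding T_def Pr_dd_Off[OF a] DyO sgnf_add A1e A2e B1e B2e B3e ..
    then show ?thesis by (simp add: algebra_simps)
  qed
  have "(\<Sum>j\<le>l. sgnf (l - j) (Pr_dd r A (l - j) (p - int j) (q + 1 - int j) (y j) (LOff a))) =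
      (\<Sum>j\<le>l. T j)"
    unfolding T_def ..
  also have "\<dots> = (\<Sum>j\<le>l. A1 j + B1 j + A2 j + B2 j + B3 j)"
    by (rule sum.cong[OF refl]) (simp add: Tj)
  also have "\<dots> = sum A1 {..l} + sum B1 {..l} + sum A2 {..l} + sum B2 {..l} + sum B3 {..l}"
    by (simp add: sum.distrib)
  also have "\<dots> = 0"
  proof -
    have s1: "sum A1 {..l} + sum B1 {..l} = 0"
      by (cases "l = 0") (simp_all add: A1_def B1_def sum.delta')
    have s2: "sum A2 {..l} + sum B2 {..l} = 0"
      by (simp add: A2_def B2_def sum.delta' sgnf_Suc)
    have s3: "sum B3 {..l} = 0"
      unfolding B3_def sgnf_sum[symmetric] using dd_rel[OF xO, of l] by simp
    show ?thesis using s1 s2 s3 by (simp add: algebra_simps)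
  qed
  finally show ?thesis unfolding y_def .
qed

lemma Pr_dd_rel_01:
  assumes x: "x \<in> car (Pr r A) p q" and r: "r = 0"
  shows "(\<Sum>j\<le>l. sgnf (l - j) (Pr_dd r A (l - j) (p - int j) (q + 1 - int j) (Pr_dd r A j p q x) L01)) = 0"
proof -
  define y where "y j = Pr_dd r A j p q x" for j
  have xD: "x (LDiag 0) \<in> car A p q" using car_Pr_Diag[OF x, of 0] by simp
  have xM: "x LMinus \<in> car A p q" by (rule car_Pr_Minus[OF x])
  have xO: "x L01 \<in> car A p (q - 1)" by (rule car_Pr_01[OF x])
  define W where "W = x (LDiag 0) - x LMinus"
  have Wc: "W \<in> car A p q" unfolding W_def using xD xM by (simp add: car_diff)
  define C1 where "C1 (j::nat) = (if j = l then dd A l p q W else 0)" for j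
  define C2 where "C2 (j::nat) = (if j = 0 then - dd A l p q W else 0)" for j
  define C3 where "C3 (j::nat) = sgnf l (sgnf (l - j) (dd A (l - j) (p - int j) (q - 1 + 1 - int j)
         (dd A j p (q - 1) (x L01))))" for j
  have Tj: "sgnf (l - j) (Pr_dd r A (l - j) (p - int j) (q + 1 - int j) (y j) L01) = C1 j + C2 j + C3 j"
    if j: "j \<le> l" for j
  proof -
    have yO: "y j L01 = (if j = 0 then W else 0) + sgnf (j + 1) (dd A j p (q - 1) (x L01))"
      unfolding y_def Pr_dd_01[OF r] W_def by simp
    let ?D = "dd A (l - j) (p - int j) (q + 1 - int j - 1)"
    have c1: "(if j = 0 then W else 0) \<in> car A (p - int j) (q + 1 - int j - 1)" using Wc by auto
    have c3': "dd A j p (q - 1) (x L01) \<in> car A (p - int j) (q + 1 - int j - 1)"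
      by (rule car_index_cong[OF dd_car[OF xO]]) simp_all
    have c3: "sgnf (j + 1) (dd A j p (q - 1) (x L01)) \<in> car A (p - int j) (q + 1 - int j - 1)"
      by (rule car_sgnf[OF c3'])
    have DyO: "?D (y j L01) = ?D (if j = 0 then W else 0) + sgnf (j + 1) (?D (dd A j p (q - 1) (x L01)))"
      unfolding yO using dd_add[OF c1 c3] dd_sgnf[OF c3'] by simp
    have e3: "?D (dd A j p (q - 1) (x L01)) = dd A (l - j) (p - int j) (q - 1 + 1 - int j) (dd A j p (q - 1) (x L01))"
      by (rule arg_cong2[where f="\<lambda>u v. dd A (l - j) u v _"]) simp_all
    have C3e: "sgnf (l - j) (sgnf (l - j + 1) (sgnf (j + 1) (?D (dd A j p (q - 1) (x L01))))) = C3 j"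
      unfolding C3_def e3 sgnf_sgnf by (rule sgnf_cong) (use j in auto)
    have C2e: "sgnf (l - j) (sgnf (l - j + 1) (?D (if j = 0 then W else 0))) = C2 j"
    proof (cases "j = 0")
      case True
      have e1: "p - int j = p" "q + 1 - int j - 1 = q" "l - j = l" using True by simp_all
      have "sgnf (l - j) (sgnf (l - j + 1) (?D (if j = 0 then W else 0))) = sgnf (l + (l + 1)) (dd A l p q W)"
        unfolding e1 using True by (simp add: sgnf_sgnf)
      also have "\<dots> = - dd A l p q W" by (rule sgnf_odd) auto
      finally show ?thesis unfolding C2_def using True by simp
    qed (simp add: C2_def)
    have C1e: "sgnf (l - j) (if l - j = 0 then y j (LDiag 0) - y j LMinus else 0) = C1 j"
    proof (cases "j = l")
      case True
      then show ?thesis unfolding C1_def W_def using xD xM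
        by (simp add: y_def Pr_dd_Diag dd_diff)
    next
      case False
      then show ?thesis unfolding C1_def using j by simp
    qed
    show ?thesis
      unfolding Pr_dd_01[OF r] DyO sgnf_add C1e C2e C3e by (simp add: algebra_simps)
  qed
  have "(\<Sum>j\<le>l. sgnf (l - j) (Pr_dd r A (l - j) (p - int j) (q + 1 - int j) (y j) L01))
      = (\<Sum>j\<le>l. C1 j + C2 j + C3 j)"
    by (rule sum.cong[OF refl]) (simp add: Tj)
  also have "\<dots> = sum C1 {..l} + sum C2 {..l} + sum C3 {..l}"
    by (simp add: sum.distrib)
  also have "\<dots> = 0"
  proof -
    have s1: "sum C1 {..l} + sum C2 {..l} = 0"
      by (simp add: C1_def C2_def sum.delta')
    have s3: "sum C3 {..l} = 0"
      unfolding C3_def sgnf_sum[symmetric] using dd_rel[OF xO, of l] by simp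
    show ?thesis using s1 s3 by simp
  qed
  finally show ?thesis unfolding y_def .
qed

lemma dd_Pr_rel:
  assumes x: "x \<in> car (Pr r A) p q"
  shows "(\<Sum>j\<le>l. sgnf (l - j) (dd (Pr r A) (l - j) (p - int j) (q + 1 - int j) (dd (Pr r A) j p q x))) = 0"
proof (rule ext)
  fix g
  have "(\<Sum>j\<le>l. sgnf (l - j) (dd (Pr r A) (l - j) (p - int j) (q + 1 - int j) (dd (Pr r A) j p q x))) g
      = (\<Sum>j\<le>l. sgnf (l - j) (Pr_dd r A (l - j) (p - int j) (q + 1 - int j) (Pr_dd r A j p q x) g))"
    using dd_Pr_car[OF x] by (simp add: dd_Pr x sum_apply sgnf_apply)
  also have "\<dots> = 0"
  proof (cases g)
    case LMinus
    then show ?thesis using dd_rel[OF car_Pr_Minus[OF x]] by simp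
  next
    case (LDiag i)
    show ?thesis
    proof (cases "i = 0 \<or> i < r")
      case True
      have xi: "x (LDiag i) \<in> car A (p + int i) (q + int i)"
        by (rule car_Pr_Diag[OF x])
      have "sgnf (l - j) (Pr_dd r A (l - j) (p - int j) (q + 1 - int j) (Pr_dd r A j p q x) (LDiag i))
          = sgnf (l - j) (dd A (l - j) (p + int i - int j) (q + int i + 1 - int j) (dd A j (p + int i)
              (q + int i) (x (LDiag i))))"
        for j
        using dd_car[OF xi, of j] by (simp add: Pr_dd_Diag[OF True] dd_sgnf sgnf_sgnf_same algebra_simps)
      then show ?thesis using LDiag dd_rel[OF xi] by simp
    qed (simp add: LDiag Pr_dd_outside)
  next
    case (LOff a)
    then show ?thesis using Pr_dd_rel_Off[OF x] by (cases "a < r") (simp_all add: Pr_dd_outside)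
  next
    case L01
    then show ?thesis using Pr_dd_rel_01[OF x] by (cases "r = 0") (simp_all add: Pr_dd_outside)
  qed
  finally show "(\<Sum>j\<le>l. sgnf (l - j) (dd (Pr r A) (l - j) (p - int j) (q + 1 - int j) (dd (Pr r
      A) j p q x))) g = 0 g"
    by simp
qed

lemma multicomplex_Pr:
  assumes "2 \<le> n"
  shows "multicomplex n (Pr r A)"
  unfolding multicomplex_def
proof (intro conjI allI ballI impI)
  show "lin_on (smul (Pr r A)) (smul (Pr r A)) (car (Pr r A) p q) (dd (Pr r A) i p q)" for i p q
    unfolding lin_on_def using dd_Pr_add dd_Pr_smul by blast
qed (simp_all add: Pr_rmodule dd_Pr_car dd_Pr_high[OF assms] dd_Pr_rel)

end

section \<open>The homotopy equivalence\<close>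

lemma iotaA_apply: "iotaA p q a b = (if b = LMinus \<or> b = LDiag 0 then a else 0)"
  by (simp add: iotaA_def)

definition proj_minus :: "int \<Rightarrow> int \<Rightarrow> (lbasis \<Rightarrow> 'a) \<Rightarrow> 'a" where
  "proj_minus p q x = x LMinus"

text \<open>The \<open>r\<close>-homotopy from \<open>\<iota>\<^sub>A \<circ> proj_minus\<close> to the
    identity of \<open>P\<^sub>r(A)\<close>.\<close>
definition path_homotopy :: "nat \<Rightarrow> nat \<Rightarrow> int \<Rightarrow> int \<Rightarrow>
    (lbasis \<Rightarrow> 'a::ab_group_add) \<Rightarrow> lbasis \<Rightarrow> 'a" where
  "path_homotopy r m p q x g = (if r = 0 then (if m = 0 \<and> g = LDiag 0 then x L01 else 0)
     else (case g of LDiag j \<Rightarrow> if j < r \<and> m < r \<and> j \<le> m then sgnf (r + 1) (x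
         (LOff (j + r - 1 - m))) else 0
           | _ \<Rightarrow> 0))"

lemma path_homotopy_Diag:
  "0 < r \<Longrightarrow> path_homotopy r m p q x (LDiag j) =
    (if j < r \<and> m < r \<and> j \<le> m then sgnf (r + 1) (x (LOff (j + r - 1 - m))) else 0)"
  by (simp add: path_homotopy_def)

lemma path_homotopy_non_Diag: "0 < r \<Longrightarrow> (\<And>j. g \<noteq> LDiag j) \<Longrightarrow>
    path_homotopy r m p q x g = 0"
  by (cases g) (auto simp: path_homotopy_def)

lemma path_homotopy_r0: "path_homotopy 0 m p q x g = (if m = 0 \<and> g = LDiag 0 then x L01 else 0)"
  by (simp add: path_homotopy_def)

context mcomplex
begin

lemma car_Pr_iotaA:
  assumes "a \<in> car A p q"
  shows "iotaA p q a \<in> car (Pr r A) p q"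
  unfolding car_Pr
proof (intro conjI ballI allI impI)
  show "iotaA p q a b \<in> car A (p - fst (lam_deg b)) (q - snd (lam_deg b))" for b
    using assms by (cases b) (auto simp: iotaA_apply)
  show "b \<notin> lam_basis r \<Longrightarrow> iotaA p q a b = 0" for b
    by (auto simp: iotaA_apply)
qed

lemma iotaA_morphism: "mc_morphism A (Pr r A) iotaA"
  unfolding mc_morphism_def
proof (intro conjI allI ballI)
  show "lin_on (smul A) (smul (Pr r A)) (car A p q) (iotaA p q)" for p q
    unfolding lin_on_def by (auto simp: iotaA_apply fun_eq_iff)
next
  fix i p q a
  assume a: "a \<in> car A p q"
  have "iotaA (p - int i) (q + 1 - int i) (dd A i p q a) g = Pr_dd r A i p q (iotaA p q a) g" for g
    by (cases g) (auto simp: Pr_dd_def iotaA_apply)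
  then show "iotaA (p - int i) (q + 1 - int i) (dd A i p q a) = dd (Pr r A) i p q (iotaA p q a)"
    by (simp add: dd_Pr[OF car_Pr_iotaA[OF a]] fun_eq_iff)
qed (rule car_Pr_iotaA)

lemma proj_minus_morphism: "mc_morphism (Pr r A) A proj_minus"
  unfolding mc_morphism_def lin_on_def
  by (simp add: proj_minus_def car_Pr_Minus dd_Pr)

lemma r_homotopy_zero: "r_homotopy r A A (\<lambda>p q x. x) (\<lambda>p q x. x) (\<lambda>m p q x. 0)"
  unfolding r_homotopy_def lin_on_def by simp

lemma r_homotopic_proj_minus_iotaA:
  "r_homotopic r A A (\<lambda>p q x. proj_minus p q (iotaA p q x)) (\<lambda>p q x. x)"
  unfolding r_homotopic_def proj_minus_def iotaA_apply using r_homotopy_zero by auto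

lemma car_Pr_path_homotopy:
  assumes x: "x \<in> car (Pr r A) p q"
  shows "path_homotopy r m p q x \<in> car (Pr r A) (p - int m + int r) (q - int m + int r - 1)"
  unfolding car_Pr
proof (intro conjI ballI allI impI)
  show "b \<notin> lam_basis r \<Longrightarrow> path_homotopy r m p q x b = 0" for b
    by (cases b) (auto simp: path_homotopy_def)
next
  fix b
  assume b: "b \<in> lam_basis r"
  show "path_homotopy r m p q x b \<in> car A (p - int m + int r - fst (lam_deg b)) (q - int m + int r -
      1 - snd (lam_deg b))"
  proof (cases "r = 0")
    case True
    then show ?thesis using car_Pr_01[OF x] by (auto simp: path_homotopy_r0)
  next
    case False
    show ?thesis
    proof (cases "\<exists>j. b = LDiag j \<and> j < r \<and> m < r \<and> j \<le> m")
      case True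
      then obtain j where j: "b = LDiag j" "j < r" "m < r" "j \<le> m" by blast
      have "x (LOff (j + r - 1 - m)) \<in> car A (p + int (j + r - 1 - m) + 1) (q + int (j + r - 1 - m))"
        by (rule car_Pr_Off[OF x])
      moreover have "int (j + r - 1 - m) = int j + int r - 1 - int m"
        using j by simp
      ultimately show ?thesis
        using j False by (simp add: path_homotopy_Diag car_sgnf algebra_simps)
    next
      case False
      then have "path_homotopy r m p q x b = 0"
        using \<open>r \<noteq> 0\<close> by (cases b) (auto simp: path_homotopy_def)
      then show ?thesis by simp
    qed
  qed
qed

lemma path_homotopy_lin: "lin_on (smul (Pr r A)) (smul (Pr r A)) (car (Pr r A) p q) (path_homotopy r m p q)"
  unfolding lin_on_def
proof (intro conjI ballI allI)
  show "path_homotopy r m p q (x + y) = path_homotopy r m p q x + path_homotopy r m p q y" for x y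
    by (rule ext) (auto simp: path_homotopy_def sgnf_add split: lbasis.split)
next
  fix c x
  assume x: "x \<in> car (Pr r A) p q"
  have "path_homotopy r m p q (smul (Pr r A) c x) g = smul (Pr r A) c (path_homotopy r m p q x) g" for g
  proof (cases "r = 0 \<or> (\<forall>j. g = LDiag j \<longrightarrow> \<not> (j < r \<and> m < r \<and> j \<le> m))")
    case True
    then show ?thesis by (cases g) (auto simp: path_homotopy_def)
  next
    case False
    then obtain j where j: "g = LDiag j" "j < r" "m < r" "j \<le> m" by blast
    then have "j + r - 1 - m < r" by arith
    then show ?thesis
      using j smul_sgnf[OF car_Pr_Off[OF x]] by (simp add: path_homotopy_Diag)
  qed
  then show "path_homotopy r m p q (smul (Pr r A) c x) = smul (Pr r A) c (path_homotopy r m p q x)"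
    by (rule ext)
qed


text \<open>On the \<open>\<beta>\<^bsub>-j,-j\<^esub>\<close>-component the terms \<open>d \<circ>
    h\<close> cancel the \<open>A\<close>-parts of \<open>h \<circ> d\<close>
  termwise (\<open>F\<close> against \<open>G3\<close>); the remaining parts of \<open>h \<circ>
      d\<close>, coming from \<open>d\<^sub>1\<close> and \<open>d\<^sub>0\<close> of
  the off-diagonal components, cancel each other unless \<open>m = r\<close>.\<close>
lemma path_homotopy_rel_Diag:
  assumes r: "0 < r" and x: "x \<in> car (Pr r A) p q" and j: "j < r"
  shows "(\<Sum>i\<le>m. sgnf (i + r) (Pr_dd r A i (p - int (m - i) + int r) (q - int (m - i) + int r - 1)
        (path_homotopy r (m - i) p q x) (LDiag j))
      + sgnf i (path_homotopy r i (p - int (m - i)) (q + 1 - int (m - i)) (Pr_dd r A (m - i) p q x) (LDiag j)))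
    = (if m = r then x (LDiag j) - iotaA p q (x LMinus) (LDiag j) else 0)"
proof -
  define P where "P i = p - int (m - i) + int r" for i
  define Q where "Q i = q - int (m - i) + int r - 1" for i
  define K where "K i = path_homotopy r (m - i) p q x" for i
  define Z where "Z i = Pr_dd r A (m - i) p q x" for i
  define s where "s = (sgnf (r + 1) :: 'a \<Rightarrow> 'a)"
  define g where "g = LDiag j"
  note LDiag = g_def
  have "(\<Sum>i\<le>m. sgnf (i + r) (Pr_dd r A i (P i) (Q i) (K i) g) + sgnf i (path_homotopy r i (p -
      int (m - i)) (q + 1 - int (m - i)) (Z i) g))
      = (if m = r then x g - iotaA p q (x LMinus) g else 0)"
  proof -
    define c where "c (i::nat) = j + r - 1 - i" for i
    define F where "F i = sgnf (i + r) (Pr_dd r A i (P i) (Q i) (K i) (LDiag j))" for i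
    define G where "G i = sgnf i (path_homotopy r i (p - int (m - i)) (q + 1 - int (m - i)) (Z i) (LDiag j))" for i
    define G1 where "G1 i = (if m - i = 1 \<and> (i < r \<and> j \<le> i) then sgnf i (s (x (LDiag (c
        i)) - (if c i = 0 then x LMinus else 0))) else 0)" for i
    define G2 where "G2 i = (if m - i = 0 \<and> (i < r \<and> j \<le> i \<and> c i + 1 < r) then sgnf i
        (s (x (LDiag (c i + 1)))) else 0)" for i
    define G3 where "G3 i = (if i < r \<and> j \<le> i then sgnf i (s (sgnf (m - i + c i) (dd A (m - i)
        (p + int (c i) + 1) (q + int (c i)) (x (LOff (c i)))))) else 0)" for i
    have Gi: "G i = G1 i + G2 i + G3 i" for i
    proof (cases "i < r \<and> j \<le> i")
      case True
      then have ci: "c i < r" unfolding c_def by arith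
      have "G i = sgnf i (s (Z i (LOff (c i))))"
        unfolding G_def using True r by (simp add: path_homotopy_Diag c_def s_def)
      also have "\<dots> = G1 i + G2 i + G3 i"
        unfolding Z_def Pr_dd_Off[OF ci] s_def G1_def G2_def G3_def using True
        by (simp add: sgnf_add)
      finally show ?thesis .
    next
      case False
      then show ?thesis unfolding G_def G1_def G2_def G3_def using r by (auto simp: path_homotopy_Diag)
    qed
    have FG: "F i + G3 (m - i) = 0" if im: "i \<le> m" for i
    proof (cases "m - i < r \<and> j \<le> m - i")
      case True
      let ?c = "c (m - i)"
      have cr: "?c < r" unfolding c_def using True by arith
      have xO: "x (LOff ?c) \<in> car A (p + int ?c + 1) (q + int ?c)" by (rule car_Pr_Off[OF x])
      have ic: "int ?c = int j + int r - 1 - int (m - i)" unfolding c_def using True by simp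
      have e1: "P i + int j = p + int ?c + 1" "Q i + int j = q + int ?c" unfolding P_def Q_def ic by simp_all
      have e2: "m - (m - i) = i" using im by simp
      have Kd: "K i (LDiag j) = s (x (LOff ?c))"
        unfolding K_def s_def c_def using True j r by (simp add: path_homotopy_Diag)
      let ?X = "dd A i (p + int ?c + 1) (q + int ?c) (x (LOff ?c))"
      have "F i = sgnf (i + r) (sgnf j (s ?X))"
        unfolding F_def Pr_dd_Diag[of j r, OF disjI2[OF j]] Kd e1 s_def using dd_sgnf[OF xO] by simp
      also have "\<dots> = sgnf (i + r + (j + (r + 1))) ?X" unfolding s_def by (simp only: sgnf_sgnf)
      finally have Fe: "F i = sgnf (i + r + (j + (r + 1))) ?X" .
      have "G3 (m - i) = sgnf (m - i) (s (sgnf (i + ?c) ?X))"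
        unfolding G3_def e2 using True by simp
      also have "\<dots> = sgnf (m - i + (r + 1 + (i + ?c))) ?X" unfolding s_def by (simp only: sgnf_sgnf)
      finally have Ge: "G3 (m - i) = sgnf (m - i + (r + 1 + (i + ?c))) ?X" .
      have h: "m - i + (r + 1 + (i + ?c)) = 2 * r + i + j" unfolding c_def using True im by arith
      have eq: "i + r + (j + (r + 1)) + (m - i + (r + 1 + (i + ?c))) = 2 * (i + 2 * r + j) + 1"
        unfolding h by arith
      have o: "odd (2 * (i + 2 * r + j) + (1::nat))" by simp
      have "odd (i + r + (j + (r + 1)) + (m - i + (r + 1 + (i + ?c))))" unfolding eq by (rule o)
      then show ?thesis unfolding Fe Ge by (rule sgnf_add_opposite)
    next
      case False
      have "K i (LDiag j) = 0" unfolding K_def using False r by (auto simp: path_homotopy_Diag)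
      then have "F i = 0" unfolding F_def using j by (simp add: Pr_dd_Diag)
      moreover have "G3 (m - i) = 0" unfolding G3_def using False by auto
      ultimately show ?thesis by simp
    qed
    have "(\<Sum>i\<le>m. sgnf (i + r) (Pr_dd r A i (P i) (Q i) (K i) g) + sgnf i (path_homotopy r i (p
        - int (m - i)) (q + 1 - int (m - i)) (Z i) g))
       = (\<Sum>i\<le>m. F i + G i)" unfolding F_def G_def LDiag ..
    also have "\<dots> = (\<Sum>i\<le>m. F i) + (\<Sum>i\<le>m. G3 i) + (sum G1 {..m} + sum G2 {..m})"
    proof -
      have "(\<Sum>i\<le>m. F i + G i) = (\<Sum>i\<le>m. F i + G3 i + (G1 i + G2 i))"
        by (rule sum.cong[OF refl]) (simp add: Gi add.commute add.left_commute)
      then show ?thesis by (simp only: sum.distrib)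
    qed
    also have "(\<Sum>i\<le>m. G3 i) = (\<Sum>i\<le>m. G3 (m - i))" by (rule sum_atMost_rev[symmetric])
    also have "(\<Sum>i\<le>m. F i) + (\<Sum>i\<le>m. G3 (m - i)) = 0"
      using FG by (simp add: sum.distrib[symmetric])
    also have "sum G1 {..m} = (if 1 \<le> m \<and> (m - 1 < r \<and> j \<le> m - 1) then sgnf (m - 1) (s
        (x (LDiag (c (m - 1))) - (if c (m - 1) = 0 then x LMinus else 0))) else 0)"
      unfolding G1_def by (rule sum_atMost_if_diff_eq_1)
    also have "sum G2 {..m} = (if m < r \<and> j \<le> m \<and> c m + 1 < r then sgnf m (s (x (LDiag (c
        m + 1)))) else 0)"
      unfolding G2_def by (rule sum_atMost_if_diff_eq_0)
    also have "0 + ((if 1 \<le> m \<and> (m - 1 < r \<and> j \<le> m - 1) then sgnf (m - 1) (s (x (LDiag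
        (c (m - 1))) - (if c (m - 1) = 0 then x LMinus else 0))) else 0)
        + (if m < r \<and> j \<le> m \<and> c m + 1 < r then sgnf m (s (x (LDiag (c m + 1)))) else 0))
       = (if m = r then x g - iotaA p q (x LMinus) g else 0)"
    proof -
      consider "m = r" | "m < r" | "r < m" by arith
      then show ?thesis
      proof cases
        case 1
        have c1: "c (m - 1) = j" unfolding c_def using 1 r by simp
        have "sgnf (m - 1) (s z) = z" for z unfolding s_def using 1 r by (simp add: sgnf_sgnf sgnf_even)
        then show ?thesis using 1 r j c1 LDiag by (auto simp: iotaA_apply)
      next
        case 2
        show ?thesis
        proof (cases "j < m")
          case True
          have c1: "c (m - 1) = j + r - m" "c m + 1 = j + r - m" unfolding c_def using True 2 by arith+
          have "sgnf (m - 1) (s (x (LDiag (j + r - m)))) + sgnf m (s (x (LDiag (j + r - m)))) = 0"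
          proof (rule sgnf_add_opposite)
            have eq: "m - 1 + m = 2 * (m - 1) + 1" using True by arith
            have o: "odd (2 * (m - 1) + (1::nat))" by simp
            show "odd (m - 1 + m)" unfolding eq by (rule o)
          qed
          then show ?thesis using 2 True c1 by auto
        next
          case False
          have "\<not> (c m + 1 < r)" if "j \<le> m" unfolding c_def using False that 2 by arith
          then show ?thesis using 2 False by auto
        qed
      next
        case 3
        then show ?thesis by auto
      qed
    qed
    finally show ?thesis .
  qed
  then show ?thesis
    unfolding P_def Q_def K_def Z_def g_def .
qed

lemma path_homotopy_rel_Off:
  assumes r: "0 < r" and x: "x \<in> car (Pr r A) p q" and a: "a < r"
  shows "(\<Sum>i\<le>m. sgnf (i + r) (Pr_dd r A i (p - int (m - i) + int r) (q - int (m - i) + int r - 1)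
        (path_homotopy r (m - i) p q x) (LOff a))
      + sgnf i (path_homotopy r i (p - int (m - i)) (q + 1 - int (m - i)) (Pr_dd r A (m - i) p q x) (LOff a)))
    = (if m = r then x (LOff a) - iotaA p q (x LMinus) (LOff a) else 0)"
proof -
  define P where "P i = p - int (m - i) + int r" for i
  define Q where "Q i = q - int (m - i) + int r - 1" for i
  define K where "K i = path_homotopy r (m - i) p q x" for i
  define Z where "Z i = Pr_dd r A (m - i) p q x" for i
  define s where "s = (sgnf (r + 1) :: 'a \<Rightarrow> 'a)"
  define g where "g = LOff a"
  note LOff = g_def
  have "(\<Sum>i\<le>m. sgnf (i + r) (Pr_dd r A i (P i) (Q i) (K i) g) + sgnf i (path_homotopy r i (p -
      int (m - i)) (q + 1 - int (m - i)) (Z i) g))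
      = (if m = r then x g - iotaA p q (x LMinus) g else 0)"
  proof -
    have K0: "K i LMinus = 0" "K i (LOff a) = 0" for i unfolding K_def using r by (simp_all add: path_homotopy_non_Diag)
    have H0: "path_homotopy r i p' q' z (LOff a) = 0" for i p' q' and z :: "lbasis \<Rightarrow> 'a"
        using r by (simp add: path_homotopy_non_Diag)
    define E1 where "E1 (i::nat) = (if i = 1 then sgnf (1 + r) (K 1 (LDiag a)) else 0)" for i
    define E2 where "E2 (i::nat) = (if i = 0 then (if a + 1 < r then sgnf r (K 0 (LDiag (a + 1))) else 0) else 0)" for i
    have "(\<Sum>i\<le>m. sgnf (i + r) (Pr_dd r A i (P i) (Q i) (K i) g) + sgnf i (path_homotopy r i (p
        - int (m - i)) (q + 1 - int (m - i)) (Z i) g))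
       = (\<Sum>i\<le>m. E1 i + E2 i)"
      by (rule sum.cong[OF refl]) (auto simp: LOff Pr_dd_Off[OF a] K0 H0 E1_def E2_def)
    also have "\<dots> = (if 1 \<le> m then sgnf (1 + r) (K 1 (LDiag a)) else 0)
         + (if a + 1 < r then sgnf r (K 0 (LDiag (a + 1))) else 0)"
      by (simp add: sum.distrib E1_def E2_def sum.delta')
    also have "\<dots> = (if m = r then x g - iotaA p q (x LMinus) g else 0)"
    proof -
      have k1: "K 1 (LDiag a) = (if 1 \<le> m \<and> m - 1 < r \<and> a \<le> m - 1 then s (x (LOff (a +
          r - m))) else 0)" if "1 \<le> m"
        unfolding K_def s_def using r a that by (auto simp: path_homotopy_Diag)
      have k0: "K 0 (LDiag (a + 1)) = (if a + 1 < r \<and> m < r \<and> a + 1 \<le> m then s (x (LOff (a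
          + r - m))) else 0)"
        unfolding K_def s_def using r a by (auto simp: path_homotopy_Diag)
      consider "m = r" | "m < r" | "r < m" by arith
      then show ?thesis
      proof cases
        case 1
        then have "K 1 (LDiag a) = s (x (LOff a))" using k1 a r by auto
        moreover have "sgnf (1 + r) (s z) = z" for z unfolding s_def by (simp add: sgnf_sgnf sgnf_even)
        ultimately show ?thesis using 1 k0 r LOff by (simp add: iotaA_apply)
      next
        case 2
        show ?thesis
        proof (cases "a < m")
          case True
          then have "(if 1 \<le> m then sgnf (1 + r) (K 1 (LDiag a)) else 0) + (if a + 1 < r then sgnf r
              (K 0 (LDiag (a + 1))) else 0)
             = sgnf (1 + r) (s (x (LOff (a + r - m)))) + sgnf r (s (x (LOff (a + r - m))))"
            using k1 k0 2 by auto
          also have "\<dots> = 0" by (rule sgnf_add_opposite) simp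
          finally show ?thesis using 2 by simp
        next
          case False
          then show ?thesis using k1 k0 2 by auto
        qed
      next
        case 3
        then show ?thesis using k1 k0 by auto
      qed
    qed
    finally show ?thesis .
  qed
  then show ?thesis
    unfolding P_def Q_def K_def Z_def g_def .
qed

lemma path_homotopy_rel_r0_Diag:
  assumes r: "r = 0" and x: "x \<in> car (Pr r A) p q"
  shows "(\<Sum>i\<le>m. sgnf (i + r) (Pr_dd r A i (p - int (m - i) + int r) (q - int (m - i) + int r - 1)
        (path_homotopy r (m - i) p q x) (LDiag 0))
      + sgnf i (path_homotopy r i (p - int (m - i)) (q + 1 - int (m - i)) (Pr_dd r A (m - i) p q x) (LDiag 0)))
    = (if m = r then x (LDiag 0) - iotaA p q (x LMinus) (LDiag 0) else 0)"
proof -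
  define P where "P i = p - int (m - i) + int r" for i
  define Q where "Q i = q - int (m - i) + int r - 1" for i
  define K where "K i = path_homotopy r (m - i) p q x" for i
  define Z where "Z i = Pr_dd r A (m - i) p q x" for i
  define g where "g = LDiag 0"
  note LDiag = g_def
  have "(\<Sum>i\<le>m. sgnf (i + r) (Pr_dd r A i (P i) (Q i) (K i) g) + sgnf i (path_homotopy r i (p -
      int (m - i)) (q + 1 - int (m - i)) (Z i) g))
      = (if m = r then x g - iotaA p q (x LMinus) g else 0)"
  proof -
    have xO: "x L01 \<in> car A p (q - 1)" by (rule car_Pr_01[OF x])
    define F where "F (i::nat) = (if i = m then sgnf m (dd A m p (q - 1) (x L01)) else 0)" for i
    define G where "G (i::nat) = (if i = 0 then (if m = 0 then x (LDiag 0) - x LMinus else 0) + sgnf (m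
        + 1) (dd A m p (q - 1) (x L01)) else 0)" for i
    have "(\<Sum>i\<le>m. sgnf (i + r) (Pr_dd r A i (P i) (Q i) (K i) g) + sgnf i (path_homotopy r i (p
        - int (m - i)) (q + 1 - int (m - i)) (Z i) g))
       = (\<Sum>i\<le>m. F i + G i)"
    proof (rule sum.cong[OF refl])
      fix i assume i: "i \<in> {..m}"
      have f: "sgnf (i + r) (Pr_dd r A i (P i) (Q i) (K i) g) = F i"
      proof (cases "i = m")
        case True
        have e: "P m = p" "Q m = q - 1" unfolding P_def Q_def using True r by simp_all
        show ?thesis unfolding LDiag using True r by (simp add: Pr_dd_Diag e K_def path_homotopy_r0 F_def)
      next
        case False
        then have "K i (LDiag 0) = 0" unfolding K_def using r i by (auto simp: path_homotopy_r0)
        then show ?thesis unfolding LDiag using False r by (simp add: Pr_dd_Diag F_def)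
      qed
      have gg: "sgnf i (path_homotopy r i (p - int (m - i)) (q + 1 - int (m - i)) (Z i) g) = G i"
        unfolding LDiag using r by (auto simp: path_homotopy_r0 G_def Z_def Pr_dd_01)
      show "sgnf (i + r) (Pr_dd r A i (P i) (Q i) (K i) g) + sgnf i (path_homotopy r i (p - int (m - i))
          (q + 1 - int (m - i)) (Z i) g) = F i + G i"
        using f gg by simp
    qed
    also have "\<dots> = sgnf m (dd A m p (q - 1) (x L01)) + ((if m = 0 then x (LDiag 0) - x LMinus else
        0) + sgnf (m + 1) (dd A m p (q - 1) (x L01)))"
      by (simp add: sum.distrib F_def G_def sum.delta')
    also have "\<dots> = (if m = 0 then x (LDiag 0) - x LMinus else 0)"
      by (simp add: sgnf_Suc)
    also have "\<dots> = (if m = r then x g - iotaA p q (x LMinus) g else 0)"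
      using r LDiag by (simp add: iotaA_apply)
    finally show ?thesis .
  qed
  then show ?thesis
    unfolding P_def Q_def K_def Z_def g_def .
qed

lemma path_homotopy_rel_r0_01:
  assumes r: "r = 0" and x: "x \<in> car (Pr r A) p q"
  shows "(\<Sum>i\<le>m. sgnf (i + r) (Pr_dd r A i (p - int (m - i) + int r) (q - int (m - i) + int r - 1)
        (path_homotopy r (m - i) p q x) (L01))
      + sgnf i (path_homotopy r i (p - int (m - i)) (q + 1 - int (m - i)) (Pr_dd r A (m - i) p q x) (L01)))
    = (if m = r then x (L01) - iotaA p q (x LMinus) (L01) else 0)"
proof -
  define P where "P i = p - int (m - i) + int r" for i
  define Q where "Q i = q - int (m - i) + int r - 1" for i
  define K where "K i = path_homotopy r (m - i) p q x" for i
  define Z where "Z i = Pr_dd r A (m - i) p q x" for i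
  define g where "g = L01"
  note L01 = g_def
  have "(\<Sum>i\<le>m. sgnf (i + r) (Pr_dd r A i (P i) (Q i) (K i) g) + sgnf i (path_homotopy r i (p -
      int (m - i)) (q + 1 - int (m - i)) (Z i) g))
      = (if m = r then x g - iotaA p q (x LMinus) g else 0)"
  proof -
    define F where "F (i::nat) = (if i = 0 then (if m = 0 then x L01 else 0) else 0)" for i
    have "(\<Sum>i\<le>m. sgnf (i + r) (Pr_dd r A i (P i) (Q i) (K i) g) + sgnf i (path_homotopy r i (p
        - int (m - i)) (q + 1 - int (m - i)) (Z i) g))
       = (\<Sum>i\<le>m. F i)"
    proof (rule sum.cong[OF refl])
      fix i assume i: "i \<in> {..m}"
      have "K i L01 = 0" "K i LMinus = 0" for i unfolding K_def using r by (simp_all add: path_homotopy_r0)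
      moreover have "K 0 (LDiag 0) = (if m = 0 then x L01 else 0)" unfolding K_def using r by (simp add:
          path_homotopy_r0)
      ultimately show "sgnf (i + r) (Pr_dd r A i (P i) (Q i) (K i) g) + sgnf i (path_homotopy r i (p -
          int (m - i)) (q + 1 - int (m - i)) (Z i) g) = F i"
        unfolding L01 using r by (simp add: Pr_dd_01 path_homotopy_r0 F_def)
    qed
    also have "\<dots> = (if m = r then x g - iotaA p q (x LMinus) g else 0)"
      using r L01 by (simp add: F_def sum.delta' iotaA_apply)
    finally show ?thesis .
  qed
  then show ?thesis
    unfolding P_def Q_def K_def Z_def g_def .
qed

lemma path_homotopy_rel_component:
  assumes x: "x \<in> car (Pr r A) p q"
  shows "(\<Sum>i\<le>m. sgnf (i + r) (Pr_dd r A i (p - int (m - i) + int r) (q - int (m - i) + int r - 1)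
        (path_homotopy r (m - i) p q x) g)
      + sgnf i (path_homotopy r i (p - int (m - i)) (q + 1 - int (m - i)) (Pr_dd r A (m - i) p q x) g))
    = (if m = r then x g - iotaA p q (x LMinus) g else 0)"
proof (cases "g \<in> lam_basis r")
  case False
  then have "path_homotopy r i p' q' z g = 0" for i p' q' and z :: "lbasis \<Rightarrow> 'a"
    by (cases g) (auto simp: path_homotopy_def)
  then show ?thesis
    using False car_Pr_outside[OF x False] by (auto simp: Pr_dd_outside iotaA_apply)
next
  case True
  show ?thesis
  proof (cases g)
    case LMinus
    then have "path_homotopy r i p' q' z g = 0" for i p' q' and z :: "lbasis \<Rightarrow> 'a"
      by (simp add: path_homotopy_def)
    then show ?thesis using LMinus by (simp add: iotaA_apply)
  next
    case (LDiag j)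
    show ?thesis
    proof (cases "r = 0")
      case True
      with \<open>g \<in> lam_basis r\<close> LDiag have "g = LDiag 0" by simp
      then show ?thesis by (simp only:) (rule path_homotopy_rel_r0_Diag[OF True x])
    next
      case False
      with \<open>g \<in> lam_basis r\<close> LDiag have "j < r" by auto
      then show ?thesis unfolding LDiag using False by (intro path_homotopy_rel_Diag[OF _ x]) simp_all
    qed
  next
    case (LOff a)
    with True have "0 < r" "a < r" by simp_all
    then show ?thesis unfolding LOff by (rule path_homotopy_rel_Off[OF _ x])
  next
    case L01
    with True have "r = 0" by simp
    then show ?thesis unfolding L01 by (rule path_homotopy_rel_r0_01[OF _ x])
  qed
qed

lemma path_homotopy_r_homotopy:
  "r_homotopy r (Pr r A) (Pr r A) (\<lambda>p q y. iotaA p q (proj_minus p q y)) (\<lambda>p q y. y) (path_homotopy r)"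
  unfolding r_homotopy_def
proof (intro conjI allI ballI)
  fix m p q x
  assume x: "x \<in> car (Pr r A) p q"
  show "(\<Sum>i\<le>m. sgnf (i + r) (dd (Pr r A) i (p - int (m - i) + int r) (q - int (m - i) + int r -
      1) (path_homotopy r (m - i) p q x))
               + sgnf i (path_homotopy r i (p - int (m - i)) (q + 1 - int (m - i)) (dd (Pr r A) (m - i) p q x)))
        = (if m = r then x - iotaA p q (proj_minus p q x) else 0)"
  proof (rule ext)
    fix g
    have "dd (Pr r A) i (p - int (m - i) + int r) (q - int (m - i) + int r - 1) (path_homotopy r (m - i) p q x)
        = Pr_dd r A i (p - int (m - i) + int r) (q - int (m - i) + int r - 1) (path_homotopy r (m - i) p q x)" for i
      by (rule dd_Pr[OF car_Pr_path_homotopy[OF x]])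
    then show "(\<Sum>i\<le>m. sgnf (i + r) (dd (Pr r A) i (p - int (m - i) + int r) (q - int (m - i) +
        int r - 1) (path_homotopy r (m - i) p q x))
               + sgnf i (path_homotopy r i (p - int (m - i)) (q + 1 - int (m - i)) (dd (Pr r A) (m - i) p q x))) g
        = (if m = r then x - iotaA p q (proj_minus p q x) else 0) g"
      using path_homotopy_rel_component[OF x, of m g]
      by (simp only: dd_Pr[OF x] sum_apply finite_atMost plus_fun_apply sgnf_apply)
        (simp add: proj_minus_def)
  qed
qed (simp_all add: car_Pr_path_homotopy path_homotopy_lin)

lemma iotaA_r_homotopy_equivalence: "r_homotopy_equivalence r A (Pr r A) iotaA"
  unfolding r_homotopy_equivalence_def
  using iotaA_morphism proj_minus_morphism r_homotopic_proj_minus_iotaA path_homotopy_r_homotopy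
  unfolding r_homotopic_def by blast

end

section \<open>The spectral sequence\<close>

text \<open>An \<open>r\<close>-homotopy \<open>h\<close> from \<open>f\<close> to \<open>g\<close>
    turns a \<open>Z\<^bsub>r+1\<^esub>\<close>-witness \<open>a\<close> of \<open>x\<close>
  into the \<open>B\<^bsub>r+1\<^esub>\<close>-witness \<open>b\<^sub>k = \<Sum>\<^sub>j (-1)^(j+r)
      h\<^bsub>k-j\<^esub>(a\<^sub>j)\<close> of \<open>g x - f x\<close>.\<close>
definition homotopy_Br_witness ::
    "nat \<Rightarrow> (nat \<Rightarrow> int \<Rightarrow> int \<Rightarrow> 'a \<Rightarrow>
        'b::ab_group_add) \<Rightarrow> (nat \<Rightarrow> 'a) \<Rightarrow> int \<Rightarrow> int
            \<Rightarrow> nat \<Rightarrow> 'b" where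
  "homotopy_Br_witness r h a p q k = (\<Sum>j\<le>k. sgnf (j + r) (h (k - j) (p - int j) (q - int j) (a j)))"

lemma sum_dd_reflect:
  "(\<Sum>i\<le>l. sgnf i (dd X i (P - int (l - i)) (Q - int (l - i)) (c (l - i))))
    = (\<Sum>j\<le>l. sgnf (l - j) (dd X (l - j) (P - int j) (Q - int j) (c j)))"
  by (rule sum_atMost_reflect[where g = "\<lambda>i j. sgnf i (dd X i (P - int j) (Q - int j) (c j))"])

context mcomplex
begin

lemma sum_linear_image_Zr_rel:
  assumes hl: "\<And>i p q. lin_on (smul A) sB (car A p q) (h i p q)"
    and ac: "\<And>j. j \<le> l \<Longrightarrow> a j \<in> car A (p - int j) (q - int j)"
    and arel: "\<And>l'. l' \<le> l \<Longrightarrow> (\<Sum>j\<le>l'. sgnf (l' - j) (dd A (l' - j) (p -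
        int j) (q - int j) (a j))) = 0"
  shows "(\<Sum>j\<le>l. \<Sum>i\<le>l - j. sgnf j (sgnf i (h i (p - int j - int (l - j - i)) (q - int j
      + 1 - int (l - j - i))
      (dd A (l - j - i) (p - int j) (q - int j) (a j))))) = 0"
proof -
  have "(\<Sum>j\<le>l. \<Sum>i\<le>l - j. sgnf j (sgnf i (h i (p - int j - int (l - j - i)) (q - int j
      + 1 - int (l - j - i))
      (dd A (l - j - i) (p - int j) (q - int j) (a j)))))
    = (\<Sum>i\<le>l. \<Sum>j\<le>l - i. sgnf j (sgnf i (h i (p - int j - int (l - j - i)) (q - int j +
        1 - int (l - j - i)) (dd A (l - j - i) (p - int j) (q - int j) (a j)))))"
    by (rule sum_atMost_triangle_swap[symmetric])
  also have "\<dots> = (\<Sum>i\<le>l. 0)"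
  proof (rule sum.cong[OF refl])
    fix i assume i: "i \<in> {..l}"
    let ?L = "l - i"
    have mem: "dd A (l - j - i) (p - int j) (q - int j) (a j) \<in> car A (p - int ?L) (q + 1 - int ?L)"
        if "j \<le> ?L" for j
      by (rule car_index_cong[OF dd_car[OF ac]]) (use that i in auto)
    have ie: "h i (p - int j - int (l - j - i)) (q - int j + 1 - int (l - j - i)) = h i (p - int ?L) (q + 1 - int ?L)"
      if "j \<le> ?L" for j using that i by (simp add: of_nat_diff algebra_simps)
    have st1: "sgnf j (sgnf i (h i (p - int j - int (l - j - i)) (q - int j + 1 - int (l - j - i)) (dd A
        (l - j - i) (p - int j) (q - int j) (a j))))
       = sgnf i (h i (p - int ?L) (q + 1 - int ?L) (sgnf j (dd A (l - j - i) (p - int j) (q - int j) (a j))))"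
      if jL: "j \<in> {..?L}" for j
    proof -
      have jL': "j \<le> ?L" using jL by simp
      show ?thesis
        unfolding ie[OF jL'] lin_on_sgnf[OF rmodule hl mem[OF jL']] sgnf_sgnf by (simp only: add.commute)
    qed
    have "(\<Sum>j\<le>?L. sgnf j (sgnf i (h i (p - int j - int (l - j - i)) (q - int j + 1 - int (l - j
        - i)) (dd A (l - j - i) (p - int j) (q - int j) (a j)))))
      = (\<Sum>j\<le>?L. sgnf i (h i (p - int ?L) (q + 1 - int ?L) (sgnf j (dd A (l - j - i) (p - int j)
          (q - int j) (a j)))))"
      by (rule sum.cong[OF refl]) (rule st1)
    also have "\<dots> = sgnf i (\<Sum>j\<le>?L. h i (p - int ?L) (q + 1 - int ?L) (sgnf j (dd A (l - j
        - i) (p - int j) (q - int j) (a j))))"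
      by (simp only: sgnf_sum)
    also have "(\<Sum>j\<le>?L. h i (p - int ?L) (q + 1 - int ?L) (sgnf j (dd A (l - j - i) (p - int j)
        (q - int j) (a j))))
       = h i (p - int ?L) (q + 1 - int ?L) (\<Sum>j\<le>?L. sgnf j (dd A (l - j - i) (p - int j) (q - int j) (a j)))"
      by (rule lin_on_sum[OF rmodule hl, symmetric]) (rule car_sgnf, rule mem, simp)
    also have "(\<Sum>j\<le>?L. sgnf j (dd A (l - j - i) (p - int j) (q - int j) (a j)))
       = sgnf ?L (\<Sum>j\<le>?L. sgnf (?L - j) (dd A (?L - j) (p - int j) (q - int j) (a j)))"
    proof -
      have "(\<Sum>j\<le>?L. sgnf j (dd A (l - j - i) (p - int j) (q - int j) (a j)))
         = (\<Sum>j\<le>?L. sgnf (?L + (?L - j)) (dd A (?L - j) (p - int j) (q - int j) (a j)))"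
      proof (rule sum.cong[OF refl])
        fix j assume "j \<in> {..?L}"
        then have e1: "l - j - i = ?L - j" and e2: "even j = even (?L + (?L - j))" using i by auto
        show "sgnf j (dd A (l - j - i) (p - int j) (q - int j) (a j)) = sgnf (?L + (?L - j)) (dd A (?L -
            j) (p - int j) (q - int j) (a j))"
          unfolding e1 by (rule sgnf_cong[OF e2])
      qed
      then show ?thesis by (simp add: sgnf_sum sgnf_sgnf)
    qed
    also have "(\<Sum>j\<le>?L. sgnf (?L - j) (dd A (?L - j) (p - int j) (q - int j) (a j))) = 0"
      by (rule arel) simp
    finally show "(\<Sum>j\<le>?L. sgnf j (sgnf i (h i (p - int j - int (l - j - i)) (q - int j + 1 -
        int (l - j - i)) (dd A (l - j - i) (p - int j) (q - int j) (a j))))) = 0"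
      using lin_on_zero[OF rmodule hl] by simp
  qed
  finally show ?thesis by simp
qed

lemma homotopy_Br_witness_car:
  assumes mB: "mcomplex nB B" and H: "r_homotopy r A B f g h"
    and ac: "\<And>j. j \<le> r \<Longrightarrow> a j \<in> car A (p - int j) (q - int j)" and k: "k \<le> r"
  shows "homotopy_Br_witness r h a p q k \<in> car B (p + int (Suc r) - 1 - int k) (q + int (Suc r) - 2 - int k)"
proof -
  interpret B: mcomplex nB B by (rule mB)
  have "h (k - j) (p - int j) (q - int j) (a j) \<in> car B (p + int (Suc r) - 1 - int k) (q + int (Suc r) - 2 - int k)"
    if "j \<le> k" for j
  proof (rule car_index_cong)
    show "h (k - j) (p - int j) (q - int j) (a j) \<in> car B (p - int j - int (k - j) + int r) (q - int
        j - int (k - j) + int r - 1)"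
      using H ac[OF le_trans[OF that k]] unfolding r_homotopy_def by blast
  qed (use that in simp_all)
  then show ?thesis
    unfolding homotopy_Br_witness_def by (intro B.car_sum B.car_sgnf) simp
qed

lemma homotopy_Br_witness_rel:
  assumes mB: "mcomplex nB B" and H: "r_homotopy r A B f g h"
    and ac: "\<And>j. j \<le> r \<Longrightarrow> a j \<in> car A (p - int j) (q - int j)"
    and arel: "\<And>l. l \<le> r \<Longrightarrow> (\<Sum>j\<le>l. sgnf (l - j) (dd A (l - j) (p - int
        j) (q - int j) (a j))) = 0"
    and lr: "l \<le> r"
  shows "(\<Sum>i\<le>l. sgnf i (dd B i (p + int (Suc r) - 1 - int (l - i)) (q + int (Suc r) - 2 - int (l - i))
      (homotopy_Br_witness r h a p q (l - i))))
    = (if l = r then g p q (a 0) - f p q (a 0) else 0)"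
proof -
  interpret B: mcomplex nB B by (rule mB)
  have hc: "\<And>m p q z. z \<in> car A p q \<Longrightarrow> h m p q z \<in> car B (p - int m + int r)
      (q - int m + int r - 1)"
    and hl: "\<And>m p q. lin_on (smul A) (smul B) (car A p q) (h m p q)"
    and hr: "\<And>m p q z. z \<in> car A p q \<Longrightarrow> (\<Sum>i\<le>m. sgnf (i + r) (dd B i (p
        - int (m - i) + int r) (q - int (m - i) + int r - 1)
                                   (h (m - i) p q z))
               + sgnf i (h i (p - int (m - i)) (q + 1 - int (m - i)) (dd A (m - i) p q z)))
        = (if m = r then g p q z - f p q z else 0)"
    using H unfolding r_homotopy_def by blast+
  define b where "b = homotopy_Br_witness r h a p q"
  define PI where "PI l i = p + int (Suc r) - 1 - int (l - i)" for l i
  define QI where "QI l i = q + int (Suc r) - 2 - int (l - i)" for l i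
  have hcj: "h (k - j) (p - int j) (q - int j) (a j) \<in> car B (p + int (Suc r) - 1 - int k) (q + int
      (Suc r) - 2 - int k)"
    if "j \<le> k" "k \<le> r" for j k
    by (rule car_index_cong[OF hc[OF ac]]) (use that in simp_all)
  have "(\<Sum>i\<le>l. sgnf i (dd B i (PI l i) (QI l i) (b (l - i))))
     = (\<Sum>i\<le>l. \<Sum>j\<le>l - i. sgnf i (sgnf (j + r) (dd B i (PI l i) (QI l i) (h (l - i - j)
         (p - int j) (q - int j) (a j)))))"
  proof (rule sum.cong[OF refl])
    fix i assume i: "i \<in> {..l}"
    have mem: "h (l - i - j) (p - int j) (q - int j) (a j) \<in> car B (PI l i) (QI l i)" if "j \<in> {..l - i}" for j
      unfolding PI_def QI_def by (rule hcj) (use that i lr in auto)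
    show "sgnf i (dd B i (PI l i) (QI l i) (b (l - i))) =
        (\<Sum>j\<le>l - i. sgnf i (sgnf (j + r) (dd B i (PI l i) (QI l i) (h (l - i - j) (p - int j) (q
            - int j) (a j)))))"
    proof -
      have e1: "dd B i (PI l i) (QI l i) (b (l - i)) = (\<Sum>j\<le>l - i. dd B i (PI l i) (QI l i)
          (sgnf (j + r) (h (l - i - j) (p - int j) (q - int j) (a j))))"
        unfolding b_def homotopy_Br_witness_def by (rule B.dd_sum, rule B.car_sgnf, rule mem) simp
      have e2: "\<dots> = (\<Sum>j\<le>l - i. sgnf (j + r) (dd B i (PI l i) (QI l i) (h (l - i - j) (p -
          int j) (q - int j) (a j))))"
        by (rule sum.cong[OF refl], rule B.dd_sgnf[OF mem]) simp
      show ?thesis by (simp only: e1 e2 sgnf_sum)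
    qed
  qed
  also have "\<dots> = (\<Sum>j\<le>l. \<Sum>i\<le>l - j. sgnf i (sgnf (j + r) (dd B i (PI l i) (QI l i)
      (h (l - j - i) (p - int j) (q - int j) (a j)))))"
    by (subst sum_atMost_triangle_swap) (simp add: add.commute)
  also have "\<dots> = (\<Sum>j\<le>l. sgnf j ((if l - j = r then g (p - int j) (q - int j) (a j) - f (p
      - int j) (q - int j) (a j) else 0)
       - (\<Sum>i\<le>l - j. sgnf i (h i (p - int j - int (l - j - i)) (q - int j + 1 - int (l - j - i))
           (dd A (l - j - i) (p - int j) (q - int j) (a j))))))"
  proof (rule sum.cong[OF refl])
    fix j assume j: "j \<in> {..l}"
    let ?M = "l - j"
    have ajc: "a j \<in> car A (p - int j) (q - int j)" using j lr ac by auto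
    have R: "(\<Sum>i\<le>?M. sgnf (i + r) (dd B i (p - int j - int (?M - i) + int r) (q - int j - int
        (?M - i) + int r - 1)
                                 (h (?M - i) (p - int j) (q - int j) (a j)))
             + sgnf i (h i (p - int j - int (?M - i)) (q - int j + 1 - int (?M - i)) (dd A (?M - i) (p -
                 int j) (q - int j) (a j))))
      = (if ?M = r then g (p - int j) (q - int j) (a j) - f (p - int j) (q - int j) (a j) else 0)"
      by (rule hr[OF ajc])
    have ie: "p - int j - int (?M - i) + int r = PI l i" "q - int j - int (?M - i) + int r - 1 = QI l i"
      if "i \<le> ?M" for i unfolding PI_def QI_def using that j by auto
    define X where "X i = dd B i (PI l i) (QI l i) (h (?M - i) (p - int j) (q - int j) (a j))" for i
    define Y where "Y i = sgnf i (h i (p - int j - int (?M - i)) (q - int j + 1 - int (?M - i)) (dd A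
        (?M - i) (p - int j) (q - int j) (a j)))" for i
    have R2: "(\<Sum>i\<le>?M. sgnf (i + r) (X i)) + (\<Sum>i\<le>?M. Y i) = (if ?M = r then g (p - int
        j) (q - int j) (a j) - f (p - int j) (q - int j) (a j) else 0)"
    proof -
      have "(\<Sum>i\<le>?M. sgnf (i + r) (X i) + Y i) = (if ?M = r then g (p - int j) (q - int j) (a j)
          - f (p - int j) (q - int j) (a j) else 0)"
        unfolding R[symmetric] X_def Y_def by (rule sum.cong[OF refl]) (use j in \<open>auto simp:
            PI_def QI_def of_nat_diff algebra_simps\<close>)
      then show ?thesis by (simp add: sum.distrib)
    qed
    have "(\<Sum>i\<le>?M. sgnf i (sgnf (j + r) (X i))) = sgnf j (\<Sum>i\<le>?M. sgnf (i + r) (X i))"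
      by (simp add: sgnf_sum sgnf_sgnf algebra_simps)
    also have "(\<Sum>i\<le>?M. sgnf (i + r) (X i)) = (if ?M = r then g (p - int j) (q - int j) (a j) -
        f (p - int j) (q - int j) (a j) else 0) - (\<Sum>i\<le>?M. Y i)"
    proof -
      have "(\<Sum>i\<le>?M. sgnf (i + r) (X i)) = ((\<Sum>i\<le>?M. sgnf (i + r) (X i)) +
          (\<Sum>i\<le>?M. Y i)) - (\<Sum>i\<le>?M. Y i)"
        by (rule add_diff_cancel_right'[symmetric])
      then show ?thesis unfolding R2 .
    qed
    finally show "(\<Sum>i\<le>l - j. sgnf i (sgnf (j + r) (dd B i (PI l i) (QI l i) (h (l - j - i) (p -
        int j) (q - int j) (a j))))) =
        sgnf j ((if l - j = r then g (p - int j) (q - int j) (a j) - f (p - int j) (q - int j) (a j) else 0)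
       - (\<Sum>i\<le>l - j. sgnf i (h i (p - int j - int (l - j - i)) (q - int j + 1 - int (l - j - i))
           (dd A (l - j - i) (p - int j) (q - int j) (a j)))))"
      unfolding X_def Y_def .
  qed
  also have "\<dots> = (\<Sum>j\<le>l. sgnf j (if l - j = r then g (p - int j) (q - int j) (a j) - f (p
      - int j) (q - int j) (a j) else 0))
       - (\<Sum>j\<le>l. \<Sum>i\<le>l - j. sgnf j (sgnf i (h i (p - int j - int (l - j - i)) (q - int j
           + 1 - int (l - j - i)) (dd A (l - j - i) (p - int j) (q - int j) (a j)))))"
    by (simp add: sgnf_diff sum_subtractf sgnf_sum)
  also have "(\<Sum>j\<le>l. sgnf j (if l - j = r then g (p - int j) (q - int j) (a j) - f (p - int j)
      (q - int j) (a j) else 0))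
     = (if l = r then g p q (a 0) - f p q (a 0) else 0)"
  proof -
    have "(\<Sum>j\<le>l. sgnf j (if l - j = r then g (p - int j) (q - int j) (a j) - f (p - int j) (q -
        int j) (a j) else 0))
       = (\<Sum>j\<le>l. if j = 0 then (if l = r then g p q (a 0) - f p q (a 0) else 0) else 0)"
      by (rule sum.cong[OF refl]) (use lr in auto)
    then show ?thesis by (simp add: sum.delta')
  qed
  also have "(\<Sum>j\<le>l. \<Sum>i\<le>l - j. sgnf j (sgnf i (h i (p - int j - int (l - j - i)) (q -
      int j + 1 - int (l - j - i)) (dd A (l - j - i) (p - int j) (q - int j) (a j)))))
     = 0"
    by (rule sum_linear_image_Zr_rel[OF hl]) (use lr in \<open>simp_all add: ac arel\<close>)
  finally show ?thesis
    unfolding b_def PI_def QI_def by simp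
qed


lemma r_homotopy_diff_in_Br:
  assumes mB: "mcomplex nB B" and H: "r_homotopy r A B f g h" and x: "x \<in> Zr A (Suc r) p q"
  shows "g p q x - f p q x \<in> Br B (Suc r) p q"
proof -
  interpret B: mcomplex nB B by (rule mB)
  from x obtain a where a0: "a 0 = x" and xc: "x \<in> car A p q"
    and aj: "\<And>j. 1 \<le> j \<and> j < Suc r \<Longrightarrow> a j \<in> car A (p - int j) (q - int j)"
    and arel: "\<And>l. l < Suc r \<Longrightarrow> (\<Sum>j\<le>l. sgnf (l - j) (dd A (l - j) (p - int
        j) (q - int j) (a j))) = 0"
    unfolding Zr_def by blast
  have ac: "a j \<in> car A (p - int j) (q - int j)" if "j \<le> r" for j
    using aj[of j] that a0 xc by (cases "j = 0") auto
  define b where "b = homotopy_Br_witness r h a p q"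
  have bc: "b k \<in> car B (p + int (Suc r) - 1 - int k) (q + int (Suc r) - 2 - int k)" if "k \<le> r" for k
    unfolding b_def by (rule homotopy_Br_witness_car[OF mB H ac that])
  have T: "(\<Sum>i\<le>l. sgnf i (dd B i (p + int (Suc r) - 1 - int (l - i)) (q + int (Suc r) - 2 - int
      (l - i)) (b (l - i))))
      = (if l = r then g p q x - f p q x else 0)" if "l \<le> r" for l
    unfolding b_def a0[symmetric] by (rule homotopy_Br_witness_rel[OF mB H ac arel that]) simp_all
  have Tr: "g p q x - f p q x = (\<Sum>i\<le>r. sgnf i (dd B i (p + int (Suc r) - 1 - int (r - i)) (q +
      int (Suc r) - 2 - int (r - i)) (b (r - i))))"
    using T[of r] by simp
  have "g p q x - f p q x \<in> car B p q"
    unfolding Tr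
  proof (intro B.car_sum B.car_sgnf)
    fix i
    assume "i \<in> {..r}"
    show "dd B i (p + int (Suc r) - 1 - int (r - i)) (q + int (Suc r) - 2 - int (r - i)) (b (r - i)) \<in> car B p q"
      by (rule car_index_cong[OF B.dd_car[OF bc[OF diff_le_self]]]) (use \<open>i \<in> {..r}\<close> in
          \<open>auto simp: of_nat_diff\<close>)
  qed
  moreover have "g p q x - f p q x = dd B 0 p (q - 1) (b 0)" and "b 0 \<in> car B p (q - 1)" if "r = 0"
    using Tr bc[of 0] that by simp_all
  moreover have "g p q x - f p q x = (\<Sum>i<Suc r. sgnf i (dd B i (p + int (Suc r) - 1 - int (Suc r - 1 - i))
      (q + int (Suc r) - 2 - int (Suc r - 1 - i)) (b (Suc r - 1 - i))))"
    unfolding Tr lessThan_Suc_atMost by simp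
  moreover have "(\<Sum>i\<le>l. sgnf i (dd B i (p + int (Suc r) - 1 - int (l - i))
      (q + int (Suc r) - 2 - int (l - i)) (b (l - i)))) = 0" if "l + 2 \<le> Suc r" for l
    using T[of l] that by simp
  ultimately show ?thesis
    unfolding Br_def using bc by (cases "r = 0") (auto simp: less_Suc_eq_le)
qed

lemma morphism_sum_dd:
  assumes F: "mc_morphism A B f" and a: "\<And>j. j \<le> l \<Longrightarrow> a j \<in> car A (p - int j) (q - int j)"
  shows "f (p - int l) (q + 1 - int l) (\<Sum>j\<le>l. sgnf (l - j) (dd A (l - j) (p - int j) (q - int j) (a j)))
    = (\<Sum>j\<le>l. sgnf (l - j) (dd B (l - j) (p - int j) (q - int j) (f (p - int j) (q - int j) (a j))))"
proof -
  have fl: "\<And>p q. lin_on (smul A) (smul B) (car A p q) (f p q)"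
    and fd: "\<And>i p q z. z \<in> car A p q \<Longrightarrow> f (p - int i) (q + 1 - int i) (dd A i p
        q z) = dd B i p q (f p q z)"
    using F unfolding mc_morphism_def by blast+
  have mem: "dd A (l - j) (p - int j) (q - int j) (a j) \<in> car A (p - int l) (q + 1 - int l)" if "j \<le> l" for j
    by (rule car_index_cong[OF dd_car[OF a[OF that]]]) (use that in auto)
  have "f (p - int l) (q + 1 - int l) (\<Sum>j\<le>l. sgnf (l - j) (dd A (l - j) (p - int j) (q - int j) (a j)))
      = (\<Sum>j\<le>l. sgnf (l - j) (f (p - int l) (q + 1 - int l) (dd A (l - j) (p - int j) (q - int j) (a j))))"
    by (subst lin_on_sum[OF rmodule fl]) (auto simp: car_sgnf mem lin_on_sgnf[OF rmodule fl])
  also have "\<dots> = (\<Sum>j\<le>l. sgnf (l - j) (dd B (l - j) (p - int j) (q - int j) (f (p - int j)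
      (q - int j) (a j))))"
  proof (rule sum.cong)
    fix j
    assume "j \<in> {..l}"
    then have "p - int l = p - int j - int (l - j)" "q + 1 - int l = q - int j + 1 - int (l - j)"
      by simp_all
    then have "f (p - int l) (q + 1 - int l) (dd A (l - j) (p - int j) (q - int j) (a j))
        = f (p - int j - int (l - j)) (q - int j + 1 - int (l - j)) (dd A (l - j) (p - int j) (q - int j) (a j))"
      by (simp only:)
    also have "\<dots> = dd B (l - j) (p - int j) (q - int j) (f (p - int j) (q - int j) (a j))"
      using \<open>j \<in> {..l}\<close> by (simp only: fd a atMost_iff)
    finally show "sgnf (l - j) (f (p - int l) (q + 1 - int l) (dd A (l - j) (p - int j) (q - int j) (a j)))
        = sgnf (l - j) (dd B (l - j) (p - int j) (q - int j) (f (p - int j) (q - int j) (a j)))"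
      by simp
  qed simp
  finally show ?thesis .
qed

lemma morphism_Zr:
  assumes F: "mc_morphism A B f" and x: "x \<in> Zr A k p q"
  shows "f p q x \<in> Zr B k p q"
proof -
  have fc: "\<And>p q z. z \<in> car A p q \<Longrightarrow> f p q z \<in> car B p q"
    and fl: "\<And>p q. lin_on (smul A) (smul B) (car A p q) (f p q)"
    using F unfolding mc_morphism_def by blast+
  from x obtain a where a0: "a 0 = x" and xc: "x \<in> car A p q"
    and aj: "\<And>j. 1 \<le> j \<and> j < k \<Longrightarrow> a j \<in> car A (p - int j) (q - int j)"
    and arel: "\<And>l. l < k \<Longrightarrow> (\<Sum>j\<le>l. sgnf (l - j) (dd A (l - j) (p - int j)
        (q - int j) (a j))) = 0"
    unfolding Zr_def by blast
  have ac: "a j \<in> car A (p - int j) (q - int j)" if "j < k" for j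
    using aj[of j] that a0 xc by (cases "j = 0") auto
  have "(\<Sum>j\<le>l. sgnf (l - j) (dd B (l - j) (p - int j) (q - int j) (f (p - int j) (q - int j) (a j)))) = 0"
    if "l < k" for l
    using morphism_sum_dd[OF F, of l a p q] that ac arel[OF that] lin_on_zero[OF rmodule fl] by simp
  then show ?thesis
    unfolding Zr_def using fc[OF xc] fc[OF aj] a0 by (intro CollectI conjI exI[where x="\<lambda>j. f (p
        - int j) (q - int j) (a j)"]) auto
qed

lemma morphism_Br:
  assumes F: "mc_morphism A B f" and x: "x \<in> Br A k p q"
  shows "f p q x \<in> Br B k p q"
proof -
  have fc: "\<And>p q z. z \<in> car A p q \<Longrightarrow> f p q z \<in> car B p q"
    and fl: "\<And>p q. lin_on (smul A) (smul B) (car A p q) (f p q)"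
    and fd: "\<And>i p q z. z \<in> car A p q \<Longrightarrow> f (p - int i) (q + 1 - int i) (dd A i p
        q z) = dd B i p q (f p q z)"
    using F unfolding mc_morphism_def by blast+
  consider "k = 0" | "k = 1" | "k \<ge> 2" by arith
  then show ?thesis
  proof cases
    case 1
    then show ?thesis using x lin_on_zero[OF rmodule fl] unfolding Br_def by simp
  next
    case 2
    then obtain y where xc: "x \<in> car A p q" and yc: "y \<in> car A p (q - 1)" and yx: "dd A 0 p (q - 1) y = x"
      using x unfolding Br_def by auto
    have "dd B 0 p (q - 1) (f p (q - 1) y) = f p q x"
      using fd[OF yc, of 0] yx by simp
    then show ?thesis unfolding Br_def using 2 fc[OF xc] fc[OF yc] by auto
  next
    case 3
    then obtain b where xc: "x \<in> car A p q"
      and bc: "\<forall>i<k. b i \<in> car A (p + int k - 1 - int i) (q + int k - 2 - int i)"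
      and xe: "x = (\<Sum>i<k. sgnf i (dd A i (p + int k - 1 - int (k - 1 - i))
                                        (q + int k - 2 - int (k - 1 - i)) (b (k - 1 - i))))"
      and brel: "\<forall>l. l + 2 \<le> k \<longrightarrow>
                 (\<Sum>i\<le>l. sgnf i (dd A i (p + int k - 1 - int (l - i))
                                        (q + int k - 2 - int (l - i)) (b (l - i)))) = 0"
      using x unfolding Br_def by auto
    define b' where "b' i = f (p + int k - 1 - int i) (q + int k - 2 - int i) (b i)" for i
    have key: "f (p + int k - 1 - int l) (q + int k - 2 + 1 - int l)
          (\<Sum>i\<le>l. sgnf i (dd A i (p + int k - 1 - int (l - i)) (q + int k - 2 - int (l - i)) (b (l - i))))
        = (\<Sum>i\<le>l. sgnf i (dd B i (p + int k - 1 - int (l - i)) (q + int k - 2 - int (l - i)) (b' (l - i))))"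
      if "l < k" for l
    proof -
      have "f (p + int k - 1 - int l) (q + int k - 2 + 1 - int l)
          (\<Sum>i\<le>l. sgnf i (dd A i (p + int k - 1 - int (l - i)) (q + int k - 2 - int (l - i)) (b (l - i))))
        = f (p + int k - 1 - int l) (q + int k - 2 + 1 - int l)
          (\<Sum>j\<le>l. sgnf (l - j) (dd A (l - j) (p + int k - 1 - int j) (q + int k - 2 - int j) (b j)))"
        by (simp only: sum_dd_reflect)
      also have "\<dots> = (\<Sum>j\<le>l. sgnf (l - j) (dd B (l - j) (p + int k - 1 - int j) (q + int k
          - 2 - int j) (b' j)))"
        unfolding b'_def by (rule morphism_sum_dd[OF F]) (use bc that in auto)
      also have "\<dots> = (\<Sum>i\<le>l. sgnf i (dd B i (p + int k - 1 - int (l - i)) (q + int k - 2 -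
          int (l - i)) (b' (l - i))))"
        by (simp only: sum_dd_reflect)
      finally show ?thesis .
    qed
    have kk: "{..<k} = {..k - 1}" and ek: "p + int k - 1 - int (k - 1) = p" "q + int k - 2 + 1 - int (k - 1) = q"
      using 3 by auto
    have "f p q x = (\<Sum>i<k. sgnf i (dd B i (p + int k - 1 - int (k - 1 - i))
        (q + int k - 2 - int (k - 1 - i)) (b' (k - 1 - i))))"
      using key[of "k - 1"] 3 unfolding xe kk ek by simp
    moreover have "(\<Sum>i\<le>l. sgnf i (dd B i (p + int k - 1 - int (l - i)) (q + int k - 2 - int (l
        - i)) (b' (l - i)))) = 0"
      if "l + 2 \<le> k" for l
      using key[of l] brel that lin_on_zero[OF rmodule fl] by simp
    moreover have "\<forall>i<k. b' i \<in> car B (p + int k - 1 - int i) (q + int k - 2 - int i)"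
      unfolding b'_def using bc fc by blast
    ultimately show ?thesis
      unfolding Br_def using 3 fc[OF xc] by auto
  qed
qed

lemma Br_uminus:
  assumes "z \<in> Br A k p q"
  shows "- z \<in> Br A k p q"
proof -
  have "mc_morphism A A (\<lambda>p q z. - z)"
    unfolding mc_morphism_def lin_on_def by (simp add: car_minus dd_minus smul_minus add.commute)
  from morphism_Br[OF this assms] show ?thesis .
qed

lemma iotaA_Er_quasi_iso:
  assumes "2 \<le> n"
  shows "Er_quasi_iso r A (Pr r A) iotaA"
  unfolding Er_quasi_iso_def E_iso_def E_surj_def E_inj_def
proof (intro conjI allI ballI impI)
  interpret P: mcomplex n "Pr r A" by (rule mcomplex.intro[OF multicomplex_Pr[OF assms]])
  fix p q
  show "\<exists>x\<in>Zr A (Suc r) p q. iotaA p q x - y \<in> Br (Pr r A) (Suc r) p q" if y: "y \<in>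
      Zr (Pr r A) (Suc r) p q" for y
  proof
    show "proj_minus p q y \<in> Zr A (Suc r) p q"
      by (rule P.morphism_Zr[OF proj_minus_morphism y])
    have "y - iotaA p q (proj_minus p q y) \<in> Br (Pr r A) (Suc r) p q"
      by (rule P.r_homotopy_diff_in_Br[OF P.mcomplex_axioms path_homotopy_r_homotopy y])
    from P.Br_uminus[OF this] show "iotaA p q (proj_minus p q y) - y \<in> Br (Pr r A) (Suc r) p q"
      by simp
  qed
  show "x \<in> Br A (Suc r) p q" if "iotaA p q x \<in> Br (Pr r A) (Suc r) p q" for x
    using P.morphism_Br[OF proj_minus_morphism that] by (simp add: proj_minus_def iotaA_def)
qed (rule iotaA_morphism)

end

section \<open>The fibration\<close>

lemma car_mc_sum [simp]: "car (mc_sum A B) p q = car A p q \<times> car B p q"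
  and dd_mc_sum [simp]: "dd (mc_sum A B) i p q z = (dd A i p q (fst z), dd B i p q (snd z))"
  and smul_mc_sum [simp]: "smul (mc_sum A B) c z = (smul A c (fst z), smul B c (snd z))"
  by (simp_all add: mc_sum_def)

lemma zero_in_Br:
  assumes "\<And>p q. 0 \<in> car B p q" and "\<And>i p q. dd B i p q 0 = 0"
  shows "0 \<in> Br B k p q"
proof -
  consider "k = 0" | "k = 1" | "k \<ge> 2" by arith
  then show ?thesis
  proof cases
    case 3
    then show ?thesis
      unfolding Br_def using assms by (auto intro!: exI[where x="\<lambda>_. 0"])
  qed (use assms in \<open>auto simp: Br_def intro!: bexI[where x=0]\<close>)
qed

text \<open>The lift of a pair \<open>(a, a')\<close> of \<open>Z\<^sub>k\<close>-witnesses in \<open>A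
    \<oplus> A\<close>: \<open>a\<close> and \<open>a'\<close> sit on
  \<open>\<beta>\<^sub>-\<close> and \<open>\<beta>\<^bsub>0,0\<^esub>\<close>, and the shifted
      differences \<open>a' - a\<close> on \<open>\<beta>\<^bsub>-t,-t\<^esub>\<close> cancel the
  off-diagonal components that \<open>d\<^sub>0\<close> and \<open>d\<^sub>1\<close> produce.\<close>
definition path_lift :: "nat \<Rightarrow> (nat \<Rightarrow> 'a) \<Rightarrow> (nat \<Rightarrow>
    'a::ab_group_add) \<Rightarrow> nat \<Rightarrow> lbasis \<Rightarrow> 'a" where
  "path_lift r a a' j g = (case g of LMinus \<Rightarrow> a j
     | LDiag t \<Rightarrow> (if t = 0 then a' j else if t \<le> j \<and> t < r then a' (j - t) - a (j - t) else 0)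
     | _ \<Rightarrow> 0)"

context mcomplex
begin

lemma piA_morphism: "mc_morphism (Pr r A) (mc_sum A A) piA"
  unfolding mc_morphism_def lin_on_def
  by (simp add: piA_def car_Pr_Minus car_Pr_Diag[where j = 0, simplified] dd_Pr Pr_dd_Diag)

lemma car_Pr_path_lift:
  assumes ac: "\<And>j. j < k \<Longrightarrow> a j \<in> car A (p - int j) (q - int j) \<and> a' j
      \<in> car A (p - int j) (q - int j)"
    and j: "j < k"
  shows "path_lift r a a' j \<in> car (Pr r A) (p - int j) (q - int j)"
  unfolding car_Pr
proof (intro conjI ballI allI impI)
  fix g
  show "path_lift r a a' j g \<in> car A (p - int j - fst (lam_deg g)) (q - int j - snd (lam_deg g))"
  proof (cases g)
    case (LDiag t)
    have "a' (j - t) - a (j - t) \<in> car A (p - int (j - t)) (q - int (j - t))"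
      using ac[of "j - t"] j by (simp add: car_diff)
    then show ?thesis
      using ac[OF j] LDiag by (auto simp: path_lift_def of_nat_diff algebra_simps)
  qed (use ac[OF j] in \<open>simp_all add: path_lift_def\<close>)
  show "g \<notin> lam_basis r \<Longrightarrow> path_lift r a a' j g = 0"
    by (cases g) (auto simp: path_lift_def)
qed

lemma path_lift_rel_Diag:
  assumes t: "0 < t" "t < r"
    and urel: "(\<Sum>j\<le>l - t. sgnf (l - t - j) (dd A (l - t - j) (p - int j) (q - int j) (a' j - a j))) = 0"
  shows "(\<Sum>j\<le>l. sgnf (l - j) (Pr_dd r A (l - j) (p - int j) (q - int j) (path_lift r a a' j) (LDiag t))) = 0"
proof -
  have "(\<Sum>j\<le>l. sgnf (l - j) (Pr_dd r A (l - j) (p - int j) (q - int j) (path_lift r a a' j) (LDiag t)))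
      = (\<Sum>j\<le>l. if t \<le> j then sgnf t (sgnf (l - t - (j - t)) (dd A (l - t - (j - t))
          (p - int (j - t)) (q - int (j - t)) (a' (j - t) - a (j - t)))) else 0)"
  proof (rule sum.cong[OF refl])
    fix j
    assume j: "j \<in> {..l}"
    show "sgnf (l - j) (Pr_dd r A (l - j) (p - int j) (q - int j) (path_lift r a a' j) (LDiag t)) =
      (if t \<le> j then sgnf t (sgnf (l - t - (j - t)) (dd A (l - t - (j - t))
          (p - int (j - t)) (q - int (j - t)) (a' (j - t) - a (j - t)))) else 0)"
    proof (cases "t \<le> j")
      case True
      have e: "l - t - (j - t) = l - j" "p - int j + int t = p - int (j - t)" "q - int j + int t = q - int (j - t)"
        using True j by (auto simp: of_nat_diff)
      have "path_lift r a a' j (LDiag t) = a' (j - t) - a (j - t)"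
        using True t by (simp add: path_lift_def)
      then show ?thesis
        unfolding Pr_dd_Diag[OF disjI2[OF t(2)]] e using True by (simp add: sgnf_sgnf add.commute)
    qed (use t in \<open>simp add: Pr_dd_Diag path_lift_def\<close>)
  qed
  also have "\<dots> = 0"
  proof (cases "t \<le> l")
    case True
    then have "(\<Sum>j\<le>l. if t \<le> j then sgnf t (sgnf (l - t - (j - t)) (dd A (l - t - (j - t))
          (p - int (j - t)) (q - int (j - t)) (a' (j - t) - a (j - t)))) else 0)
        = (\<Sum>j\<le>l - t. sgnf t (sgnf (l - t - j) (dd A (l - t - j) (p - int j) (q - int j) (a' j - a j))))"
      by (rule sum_atMost_shift)
    then show ?thesis
      by (simp only: sgnf_sum[symmetric] urel sgnf_zero)
  qed (intro sum.neutral, auto)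
  finally show ?thesis .
qed

lemma path_lift_rel_Off:
  assumes m: "m < r" and l: "l < r"
  shows "(\<Sum>j\<le>l. sgnf (l - j) (Pr_dd r A (l - j) (p - int j) (q - int j) (path_lift r a a' j) (LOff m))) = 0"
proof -
  define X where "X = path_lift r a a'"
  have "(\<Sum>j\<le>l. sgnf (l - j) (Pr_dd r A (l - j) (p - int j) (q - int j) (X j) (LOff m)))
      = (\<Sum>j\<le>l. (if l - j = 1 then - (X j (LDiag m) - (if m = 0 then a j else 0)) else 0)
          + (if l - j = 0 then (if m + 1 < r then X j (LDiag (m + 1)) else 0) else 0))"
    by (rule sum.cong) (auto simp: Pr_dd_Off[OF m] X_def path_lift_def)
  also have "\<dots> = (if 1 \<le> l then - (X (l - 1) (LDiag m) - (if m = 0 then a (l - 1) else 0)) else 0)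
      + (if m + 1 < r then X l (LDiag (m + 1)) else 0)"
    by (simp only: sum.distrib sum_atMost_if_diff_eq_1[where P = "\<lambda>_. True", unfolded simp_thms]
        sum_atMost_if_diff_eq_0[where P = "\<lambda>_. True", unfolded simp_thms] if_True)
  also have "\<dots> = 0"
  proof (cases "l = 0 \<or> m = 0")
    case True
    then show ?thesis using l by (auto simp: X_def path_lift_def)
  next
    case False
    then have "m \<le> l - 1 \<longleftrightarrow> m + 1 \<le> l" and "l - 1 - m = l - (m + 1)"
      by arith+
    then show ?thesis using False l m by (simp add: X_def path_lift_def)
  qed
  finally show ?thesis unfolding X_def .
qed

lemma Zr_path_lift:
  assumes kr: "k \<le> r"
    and ac: "\<And>j. j < k \<Longrightarrow> a j \<in> car A (p - int j) (q - int j) \<and> a' j \<in>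
        car A (p - int j) (q - int j)"
    and a0: "a 0 \<in> car A p q" "a' 0 \<in> car A p q"
    and arel: "\<And>l. l < k \<Longrightarrow> (\<Sum>j\<le>l. sgnf (l - j) (dd A (l - j) (p - int j)
        (q - int j) (a j))) = 0"
    and a'rel: "\<And>l. l < k \<Longrightarrow> (\<Sum>j\<le>l. sgnf (l - j) (dd A (l - j) (p - int j)
        (q - int j) (a' j))) = 0"
  shows "path_lift r a a' 0 \<in> Zr (Pr r A) k p q"
proof -
  define X where "X = path_lift r a a'"
  have urel: "(\<Sum>j\<le>l. sgnf (l - j) (dd A (l - j) (p - int j) (q - int j) (a' j - a j))) = 0" if "l < k" for l
    using arel[OF that] a'rel[OF that] ac that
    by (simp add: dd_diff sgnf_diff sum_subtractf)
  have X0: "X 0 \<in> car (Pr r A) p q"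
    using a0 unfolding car_Pr by (auto simp: X_def path_lift_def split: lbasis.split)
  have "(\<Sum>j\<le>l. sgnf (l - j) (dd (Pr r A) (l - j) (p - int j) (q - int j) (X j))) = 0" if l: "l < k" for l
  proof (rule ext)
    fix g
    have "(\<Sum>j\<le>l. sgnf (l - j) (dd (Pr r A) (l - j) (p - int j) (q - int j) (X j))) g
        = (\<Sum>j\<le>l. sgnf (l - j) (Pr_dd r A (l - j) (p - int j) (q - int j) (X j) g))"
      using car_Pr_path_lift[OF ac] l by (simp add: dd_Pr X_def sum_apply sgnf_apply)
    also have "\<dots> = 0"
    proof (cases g)
      case LMinus
      then show ?thesis using arel[OF l] by (simp add: X_def path_lift_def)
    next
      case (LDiag t)
      consider "t = 0" | "0 < t" "t < r" | "0 < t" "r \<le> t" by linarith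
      then show ?thesis
      proof cases
        case 2
        then show ?thesis
          unfolding LDiag X_def by (rule path_lift_rel_Diag[OF _ _ urel]) (use l in simp_all)
      qed (use a'rel[OF l] LDiag in \<open>simp_all add: X_def path_lift_def Pr_dd_Diag Pr_dd_outside\<close>)
    next
      case (LOff m)
      then show ?thesis
        using l kr path_lift_rel_Off[of m r l p q a a'] by (cases "m < r") (simp_all add: X_def Pr_dd_outside)
    next
      case L01
      then show ?thesis using l kr by (simp add: Pr_dd_outside)
    qed
    finally show "(\<Sum>j\<le>l. sgnf (l - j) (dd (Pr r A) (l - j) (p - int j) (q - int j) (X j))) g = 0 g"
      by simp
  qed
  then show ?thesis
    unfolding Zr_def X_def[symmetric] using X0 car_Pr_path_lift[OF ac]
    by (intro CollectI conjI exI[where x = X]) (auto simp: X_def)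
qed

lemma E_surj_piA:
  assumes kr: "k \<le> r"
  shows "E_surj (Pr r A) (mc_sum A A) piA k"
  unfolding E_surj_def
proof (intro allI ballI)
  fix p q y
  assume "y \<in> Zr (mc_sum A A) k p q"
  then obtain c where c0: "c 0 = y" and yc: "y \<in> car A p q \<times> car A p q"
    and cj: "\<And>j. 1 \<le> j \<and> j < k \<Longrightarrow> c j \<in> car A (p - int j) (q - int j)
        \<times> car A (p - int j) (q - int j)"
    and crel: "\<And>l. l < k \<Longrightarrow> (\<Sum>j\<le>l. sgnf (l - j) (dd (mc_sum A A) (l - j) (p
        - int j) (q - int j) (c j))) = 0"
    unfolding Zr_def by auto
  have "path_lift r (\<lambda>j. fst (c j)) (\<lambda>j. snd (c j)) 0 \<in> Zr (Pr r A) k p q"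
  proof (rule Zr_path_lift[OF kr])
    show "fst (c j) \<in> car A (p - int j) (q - int j) \<and> snd (c j) \<in> car A (p - int j) (q -
        int j)" if "j < k" for j
      using cj[of j] that c0 yc by (cases "j = 0") auto
    show "fst (c 0) \<in> car A p q" "snd (c 0) \<in> car A p q"
      using c0 yc by auto
    show "(\<Sum>j\<le>l. sgnf (l - j) (dd A (l - j) (p - int j) (q - int j) (fst (c j)))) = 0"
      and "(\<Sum>j\<le>l. sgnf (l - j) (dd A (l - j) (p - int j) (q - int j) (snd (c j)))) = 0" if "l < k" for l
      using arg_cong[OF crel[OF that], of fst] arg_cong[OF crel[OF that], of snd]
      by (simp_all add: fst_sum snd_sum sgnf_Pair)
  qed
  moreover have "piA p q (path_lift r (\<lambda>j. fst (c j)) (\<lambda>j. snd (c j)) 0) - y = 0"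
    using c0 by (simp add: piA_def path_lift_def)
  moreover have "0 \<in> Br (mc_sum A A) k p q"
    by (rule zero_in_Br) (simp_all add: zero_prod_def)
  ultimately show "\<exists>x\<in>Zr (Pr r A) k p q. piA p q x - y \<in> Br (mc_sum A A) k p q"
    by metis
qed

lemma piA_r_fibration: "r_fibration r (Pr r A) (mc_sum A A) piA"
  unfolding r_fibration_def using piA_morphism E_surj_piA by blast

end

theorem mainTheorem14:
  fixes n :: enat and r :: nat and A :: "('r::comm_ring_1, 'a::ab_group_add) mcx"
  assumes "2 \<le> n" and "multicomplex n A"
  shows "multicomplex n (Pr r A)
    \<and> r_homotopy_equivalence r A (Pr r A) iotaA
    \<and> Er_quasi_iso r A (Pr r A) iotaA
    \<and> r_fibration r (Pr r A) (mc_sum A A) piA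
    \<and> (\<forall>p q. \<forall>a\<in>car A p q. piA p q (iotaA p q a) = diagA p q a)"
proof -
  interpret mcomplex n A by (rule mcomplex.intro) (fact assms(2))
  show ?thesis
    using multicomplex_Pr[OF assms(1)] iotaA_r_homotopy_equivalence iotaA_Er_quasi_iso[OF assms(1)]
      piA_r_fibration
    by (simp add: piA_def iotaA_def diagA_def)
qed

end
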